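(* Every label of the shape $-\mid open\ n.T_1$ (with $n$ an ambient name and $T_1$ a pure process) of the mobile-ambient transition system $M_I$ is stable under $\sim^{BS}_M$: whenever $P\sim^{BS}_M Q$ and $P\xrightarrow{-|open\ n.T_1}_{M_I}P'$, there is $Q'$ with $Q\xrightarrow{-|open\ n.T_1}_{M_I}Q'$ and $P'\sim^{BS}_M Q'$.
   Context: Mobile ambients (finite, communication-free fragment). Pure processes $P::=\mathbf{0}\mid n[P]\mid M.P\mid(\nu n)P\mid P_1|P_2$, $M::=in\ n\mid out\ n\mid open\ n$. Structural congruence $\equiv$: least congruence with $|$ commutative, associative, unit $\mathbf{0}$; $(\nu n)(\nu m)P\equiv(\nu m)(\nu n)P$; $(\nu n)(P|Q)\equiv P|(\nu n)Q$ if $n\notin fn(P)$; $(\nu n)m[P]\equiv m[(\nu n)P]$ if $n\ne m$; $(\nu n)M.P\equiv M.(\nu n)P$ if $n\notin fn(M)$; $\alpha$-conversion. Reduction $\rightsquigarrow$: least relation closed under $\equiv$, $(\nu n)-$, $n[-]$, $-|R$, generated by $n[in\ m.P|Q]|m[R]\rightsquigarrow m[n[P|Q]|R]$, $m[n[out\ m.P|Q]|R]\rightsquigarrow n[P|Q]|m[R]$, $open\ n.P|n[Q]\rightsquigarrow P|Q$. Barb $P\downarrow_n$ iff $P\equiv(\nu A)(n[Q]|R)$ with $n\notin A$. Barbed saturated bisimilarity $\sim^{BS}_M$ is the largest symmetric relation $\mathcal{R}$ on pure processes such that if $P\,\mathcal{R}\,Q$ then for every (pure, unary) context $C[-]$ and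 name $n$: $C[P]\downarrow_n$ implies $C[Q]\downarrow_n$, and $C[P]\rightsquigarrow P'$ implies $C[Q]\rightsquigarrow Q'$ for some $Q'$ with $P'\,\mathcal{R}\,Q'$. In $M_I$, $P\xrightarrow{-|open\ n.T_1}_{M_I}P'$ holds iff $P\equiv(\nu A)(n[P_1]|P_2)$ with $n\notin A$ and $P'\equiv(\nu A)(P_1|T_1|P_2)$ (with $A$ $\alpha$-converted to avoid capturing free names of $T_1$); this is the instantiation of the rule (CoOpen) $P\xrightarrow{-|open\ n.X_1}(\nu A)(P_1|X_1|P_2)$ by substituting $T_1$ for the process variable $X_1$. *)

theory Defs
  imports Main
begin

(* Ambient names: an infinite supply, here the natural numbers. *)
type_synonym name = nat

datatype cap = In name | Out name | Open name

datatype proc =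
    Nil
  | Amb name proc
  | Act cap proc
  | Res name proc
  | Par proc proc

fun fn_cap :: "cap \<Rightarrow> name set" where
  "fn_cap (In n) = {n}"
| "fn_cap (Out n) = {n}"
| "fn_cap (Open n) = {n}"

fun fn :: "proc \<Rightarrow> name set" where
  "fn Nil = {}"
| "fn (Amb n P) = insert n (fn P)"
| "fn (Act M P) = fn_cap M \<union> fn P"
| "fn (Res n P) = fn P - {n}"
| "fn (Par P Q) = fn P \<union> fn Q"

fun names :: "proc \<Rightarrow> name set" where
  "names Nil = {}"
| "names (Amb n P) = insert n (names P)"
| "names (Act M P) = fn_cap M \<union> names P"
| "names (Res n P) = insert n (names P)"
| "names (Par P Q) = names P \<union> names Q"

(* renaming of free occurrences of n into m; capture-free whenever m \<notin> names P *)
definition rn :: "name \<Rightarrow> name \<Rightarrow> name \<Rightarrow> name" where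
  "rn m n k = (if k = n then m else k)"

fun subst_cap :: "name \<Rightarrow> name \<Rightarrow> cap \<Rightarrow> cap" where
  "subst_cap m n (In k) = In (rn m n k)"
| "subst_cap m n (Out k) = Out (rn m n k)"
| "subst_cap m n (Open k) = Open (rn m n k)"

fun subst :: "name \<Rightarrow> name \<Rightarrow> proc \<Rightarrow> proc" where
  "subst m n Nil = Nil"
| "subst m n (Amb k P) = Amb (rn m n k) (subst m n P)"
| "subst m n (Act M P) = Act (subst_cap m n M) (subst m n P)"
| "subst m n (Res k P) = (if k = n then Res k P else Res k (subst m n P))"
| "subst m n (Par P Q) = Par (subst m n P) (subst m n Q)"

fun resl :: "name list \<Rightarrow> proc \<Rightarrow> proc" where
  "resl [] P = P"
| "resl (a # A) P = Res a (resl A P)"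

inductive scong :: "proc \<Rightarrow> proc \<Rightarrow> bool" where
  sc_refl: "scong P P"
| sc_sym: "scong P Q \<Longrightarrow> scong Q P"
| sc_trans: "scong P Q \<Longrightarrow> scong Q R \<Longrightarrow> scong P R"
| sc_amb: "scong P Q \<Longrightarrow> scong (Amb n P) (Amb n Q)"
| sc_act: "scong P Q \<Longrightarrow> scong (Act M P) (Act M Q)"
| sc_res: "scong P Q \<Longrightarrow> scong (Res n P) (Res n Q)"
| sc_par: "scong P P' \<Longrightarrow> scong Q Q' \<Longrightarrow> scong (Par P Q) (Par P' Q')"
| sc_par_comm: "scong (Par P Q) (Par Q P)"
| sc_par_assoc: "scong (Par (Par P Q) R) (Par P (Par Q R))"
| sc_par_nil: "scong (Par P Nil) P"
| sc_res_res: "scong (Res n (Res m P)) (Res m (Res n P))"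
| sc_res_par: "n \<notin> fn P \<Longrightarrow> scong (Res n (Par P Q)) (Par P (Res n Q))"
| sc_res_amb: "n \<noteq> m \<Longrightarrow> scong (Res n (Amb m P)) (Amb m (Res n P))"
| sc_res_act: "n \<notin> fn_cap M \<Longrightarrow> scong (Res n (Act M P)) (Act M (Res n P))"
| sc_alpha: "m \<notin> names P \<Longrightarrow> scong (Res n P) (Res m (subst m n P))"

inductive red :: "proc \<Rightarrow> proc \<Rightarrow> bool" where
  red_in: "red (Par (Amb n (Par (Act (In m) P) Q)) (Amb m R))
               (Amb m (Par (Amb n (Par P Q)) R))"
| red_out: "red (Amb m (Par (Amb n (Par (Act (Out m) P) Q)) R))
                (Par (Amb n (Par P Q)) (Amb m R))"
| red_open: "red (Par (Act (Open n) P) (Amb n Q)) (Par P Q)"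
| red_res: "red P Q \<Longrightarrow> red (Res n P) (Res n Q)"
| red_amb: "red P Q \<Longrightarrow> red (Amb n P) (Amb n Q)"
| red_par: "red P Q \<Longrightarrow> red (Par P R) (Par Q R)"
| red_scong: "scong P P' \<Longrightarrow> red P' Q' \<Longrightarrow> scong Q' Q \<Longrightarrow> red P Q"

definition barb :: "proc \<Rightarrow> name \<Rightarrow> bool" where
  "barb P n \<longleftrightarrow> (\<exists>A Q R. scong P (resl A (Par (Amb n Q) R)) \<and> n \<notin> set A)"

datatype ctx =
    Hole
  | CAmb name ctx
  | CAct cap ctx
  | CRes name ctx
  | CParL ctx proc
  | CParR proc ctx

fun fill :: "ctx \<Rightarrow> proc \<Rightarrow> proc" where
  "fill Hole P = P"
| "fill (CAmb n C) P = Amb n (fill C P)"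
| "fill (CAct M C) P = Act M (fill C P)"
| "fill (CRes n C) P = Res n (fill C P)"
| "fill (CParL C R) P = Par (fill C P) R"
| "fill (CParR R C) P = Par R (fill C P)"

definition bs_bisim :: "(proc \<Rightarrow> proc \<Rightarrow> bool) \<Rightarrow> bool" where
  "bs_bisim \<R> \<longleftrightarrow>
     (\<forall>P Q. \<R> P Q \<longrightarrow> \<R> Q P) \<and>
     (\<forall>P Q. \<R> P Q \<longrightarrow>
        (\<forall>C n. barb (fill C P) n \<longrightarrow> barb (fill C Q) n) \<and>
        (\<forall>C P'. red (fill C P) P' \<longrightarrow> (\<exists>Q'. red (fill C Q) Q' \<and> \<R> P' Q')))"

definition bisimBS :: "proc \<Rightarrow> proc \<Rightarrow> bool" where
  "bisimBS P Q \<longleftrightarrow> (\<exists>\<R>. bs_bisim \<R> \<and> \<R> P Q)"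

definition open_trans :: "name \<Rightarrow> proc \<Rightarrow> proc \<Rightarrow> proc \<Rightarrow> bool" where
  "open_trans n T P P' \<longleftrightarrow>
     (\<exists>A P1 P2. scong P (resl A (Par (Amb n P1) P2)) \<and> n \<notin> set A \<and>
                set A \<inter> fn T = {} \<and>
                scong P' (resl A (Par (Par P1 T) P2)))"

end

theory Submission
  imports Defs "HOL-Library.Multiset" "HOL-Combinatorics.Permutations"
begin

text \<open>
  Take a name k fresh for everything involved and put the processes into the context
  W = open k.0 | open n.(T | k[]). If P has the open n.T transition to P', then W | P reduces,
  by open n, to a process with barb k, which reduces, by open k, to P'. A bisimilar Q has to
  match both steps. The first reduction must create a top-level ambient k, and only the open n
  can do that, so Q has a top-level ambient n that gets opened; the second reduction must
  destroy that ambient, and only open k can do that, so the result is structurally congruent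
  to an open n.T-derivative of Q, which is therefore bisimilar to P'.

  Reasoning about which reduction happened requires a representation of processes modulo
  structural congruence: processes are mapped to multisets of trees in which restricted names
  are replaced by indices. Two processes are structurally congruent iff they have the same
  number of restrictions and their canonical forests agree up to a permutation of the indices.
\<close>

section \<open>Forests\<close>

datatype 'a gcap = CIn 'a | COut 'a | COpen 'a

datatype 'a tree = TAmb 'a "'a tree multiset" | TAct "'a gcap" "'a tree multiset"

definition map_forest :: "('a \<Rightarrow> 'b) \<Rightarrow> 'a tree multiset \<Rightarrow> 'b tree multiset" where
  "map_forest f M = image_mset (map_tree f) M"

definition set_forest :: "'a tree multiset \<Rightarrow> 'a set" where
  "set_forest M = \<Union> (set_tree ` set_mset M)"

lemma set_forest_simps[simp]:
  "set_forest {#} = {}" "set_forest (add_mset t M) = set_tree t \<union> set_forest M"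
  "set_forest (M + N) = set_forest M \<union> set_forest N"
  by (auto simp: set_forest_def)

lemma set_forest_map[simp]: "set_forest (map_forest f M) = f ` set_forest M"
  by (auto simp: set_forest_def map_forest_def tree.set_map)

lemma map_forest_simps[simp]:
  "map_forest f {#} = {#}" "map_forest f (add_mset t M) = add_mset (map_tree f t) (map_forest f M)"
  "map_forest f (M + N) = map_forest f M + map_forest f N"
  by (auto simp: map_forest_def)

lemma map_forest_comp[simp]: "map_forest f (map_forest g M) = map_forest (f \<circ> g) M"
  unfolding map_forest_def by (simp add: image_mset.compositionality o_def tree.map_comp)

lemma map_forest_cong: "(\<And>x. x \<in> set_forest M \<Longrightarrow> f x = g x) \<Longrightarrow> map_forest f M = map_forest g M"
  unfolding map_forest_def set_forest_def
  by (rule image_mset_cong, rule tree.map_cong0) auto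

lemma map_forest_id[simp]: "map_forest id M = M"
  by (simp add: map_forest_def tree.map_id0)

lemma map_forest_idI: "(\<And>x. x \<in> set_forest M \<Longrightarrow> f x = x) \<Longrightarrow> map_forest f M = M"
  using map_forest_cong[of M f id] by simp

lemma set_tree_TAct[simp]: "set_tree (TAct c M) = set_gcap c \<union> set_forest M"
  by (auto simp: set_forest_def)

lemma set_tree_TAmb[simp]: "set_tree (TAmb a M) = insert a (set_forest M)"
  by (auto simp: set_forest_def)

declare tree.set[simp del]

lemma map_tree_simps[simp]:
  "map_tree f (TAmb a M) = TAmb (f a) (map_forest f M)"
  "map_tree f (TAct c M) = TAct (map_gcap f c) (map_forest f M)"
  by (auto simp: map_forest_def)

declare tree.map[simp del]

lemma set_tree_subset_set_forest: "t \<in># M \<Longrightarrow> set_tree t \<subseteq> set_forest M"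
  by (auto simp: set_forest_def)

lemma map_tree_in_map_forest: "t \<in># M \<Longrightarrow> map_tree f t \<in># map_forest f M"
  by (simp add: map_forest_def)

lemma map_forest_add_mset_TAmb_inv:
  assumes "\<And>x. f x = a \<Longrightarrow> x = a" and "map_forest f F = add_mset (TAmb a H) S"
  shows "\<exists>H0 S0. F = add_mset (TAmb a H0) S0 \<and> map_forest f H0 = H \<and> map_forest f S0 = S"
proof -
  obtain t S0 where tS: "F = add_mset t S0" "map_tree f t = TAmb a H" "map_forest f S0 = S"
    using assms(2) unfolding map_forest_def by (metis msed_map_invR)
  obtain H0 where "t = TAmb a H0" "map_forest f H0 = H"
  proof (cases t)
    case (TAmb x M) then show ?thesis using tS(2) assms(1) that by auto
  next
    case (TAct c M) then show ?thesis using tS(2) by simp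
  qed
  then show ?thesis using tS by blast
qed

section \<open>Canonical forests of processes\<close>

datatype atom = FN name | BN nat

type_synonym forest = "atom tree multiset"

fun gcap_of_cap :: "cap \<Rightarrow> atom gcap" where
  "gcap_of_cap (In m) = CIn (FN m)"
| "gcap_of_cap (Out m) = COut (FN m)"
| "gcap_of_cap (Open m) = COpen (FN m)"

definition bind_free :: "name \<Rightarrow> nat \<Rightarrow> atom \<Rightarrow> atom" where
  "bind_free m r x = (if x = FN m then BN r else x)"

definition shift_bound :: "nat \<Rightarrow> atom \<Rightarrow> atom" where
  "shift_bound k x = (case x of BN i \<Rightarrow> BN (i+k) | FN a \<Rightarrow> FN a)"

definition perm_bound :: "(nat \<Rightarrow> nat) \<Rightarrow> atom \<Rightarrow> atom" where
  "perm_bound p x = (case x of BN i \<Rightarrow> BN (p i) | FN a \<Rightarrow> FN a)"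

fun res_count :: "proc \<Rightarrow> nat" where
  "res_count Nil = 0"
| "res_count (Amb m P) = res_count P"
| "res_count (Act M P) = res_count P"
| "res_count (Res m P) = Suc (res_count P)"
| "res_count (Par P Q) = res_count P + res_count Q"

text \<open>
  The restrictions of a process are numbered by indices below its \<open>res_count\<close>: \<open>Res m P\<close>
  turns the free name m into the next index \<open>res_count P\<close>, and in \<open>Par P Q\<close> the indices
  of Q are shifted past those of P.
\<close>

fun canon :: "proc \<Rightarrow> forest" where
  "canon Nil = {#}"
| "canon (Amb m P) = {#TAmb (FN m) (canon P)#}"
| "canon (Act M P) = {#TAct (gcap_of_cap M) (canon P)#}"
| "canon (Res m P) = map_forest (bind_free m (res_count P)) (canon P)"
| "canon (Par P Q) = canon P + map_forest (shift_bound (res_count P)) (canon Q)"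

lemma set_gcap_of_cap[simp]: "set_gcap (gcap_of_cap M) = FN ` fn_cap M"
  by (cases M) auto

lemma bind_free_FN[simp]: "bind_free m r (FN a) = (if a = m then BN r else FN a)"
  and bind_free_BN[simp]: "bind_free m r (BN i) = BN i"
  by (auto simp: bind_free_def)

lemma shift_bound_FN[simp]: "shift_bound k (FN a) = FN a"
  and shift_bound_BN[simp]: "shift_bound k (BN i) = BN (i+k)"
  by (auto simp: shift_bound_def)

lemma shift_bound_0[simp]: "shift_bound 0 = id"
  by (auto simp: fun_eq_iff shift_bound_def split: atom.splits)

lemma perm_bound_FN[simp]: "perm_bound p (FN a) = FN a"
  and perm_bound_BN[simp]: "perm_bound p (BN i) = BN (p i)"
  by (auto simp: perm_bound_def)

lemma FN_in_bind_free: "FN a \<in> bind_free m r ` S \<longleftrightarrow> a \<noteq> m \<and> FN a \<in> S"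
  by (auto simp: bind_free_def image_iff split: if_splits)

lemma BN_in_bind_free: "BN i \<in> bind_free m r ` S \<longleftrightarrow> BN i \<in> S \<or> (i = r \<and> FN m \<in> S)"
  by (auto simp: bind_free_def image_iff split: if_splits)

lemma FN_in_shift_bound: "FN a \<in> shift_bound k ` S \<longleftrightarrow> FN a \<in> S"
  by (force simp: shift_bound_def split: atom.splits)

lemma BN_in_shift_bound: "BN i \<in> shift_bound k ` S \<longleftrightarrow> k \<le> i \<and> BN (i - k) \<in> S"
proof
  assume "BN i \<in> shift_bound k ` S"
  then obtain x where "x \<in> S" "shift_bound k x = BN i" by auto
  then show "k \<le> i \<and> BN (i - k) \<in> S" by (cases x) auto
next
  assume "k \<le> i \<and> BN (i - k) \<in> S"
  then show "BN i \<in> shift_bound k ` S" by (metis le_add_diff_inverse2 shift_bound_BN image_eqI)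
qed

lemma FN_in_perm_bound: "FN a \<in> perm_bound p ` S \<longleftrightarrow> FN a \<in> S"
  by (force simp: perm_bound_def split: atom.splits)

lemmas atom_image_iffs = FN_in_bind_free BN_in_bind_free FN_in_shift_bound BN_in_shift_bound FN_in_perm_bound

lemma FN_in_canon_iff: "FN a \<in> set_forest (canon P) \<longleftrightarrow> a \<in> fn P"
  by (induction P) (auto simp: atom_image_iffs)

lemma BN_in_canon: "BN i \<in> set_forest (canon P) \<Longrightarrow> i < res_count P"
  by (induction P arbitrary: i) (force simp: atom_image_iffs)+

definition perm_eqv :: "nat \<Rightarrow> forest \<Rightarrow> forest \<Rightarrow> bool" where
  "perm_eqv r F G \<longleftrightarrow> (\<exists>p. p permutes {..<r} \<and> G = map_forest (perm_bound p) F)"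

definition bounded_by :: "nat \<Rightarrow> forest \<Rightarrow> bool" where
  "bounded_by r F \<longleftrightarrow> (\<forall>i. BN i \<in> set_forest F \<longrightarrow> i < r)"

lemma bounded_by_canon: "bounded_by (res_count P) (canon P)"
  using BN_in_canon by (auto simp: bounded_by_def)

lemma fn_names: "fn P \<subseteq> names P"
  by (induction P) auto

lemma finite_fn_cap: "finite (fn_cap M)"
  by (cases M) auto

lemma finite_names: "finite (names P)"
  by (induction P) (auto simp: finite_fn_cap)

lemma perm_eqv_refl: "perm_eqv r F F"
  unfolding perm_eqv_def
  by (rule exI[of _ id]) (auto simp: permutes_id perm_bound_def intro: map_forest_idI[symmetric] split: atom.splits)

lemma perm_eqv_sym: "perm_eqv r F G \<Longrightarrow> perm_eqv r G F"
  unfolding perm_eqv_def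
proof (elim exE conjE)
  fix p assume p: "p permutes {..<r}" and G: "G = map_forest (perm_bound p) F"
  have "map_forest (perm_bound (inv p)) G = F"
    unfolding G map_forest_comp
    by (rule map_forest_idI) (auto simp: perm_bound_def permutes_inverses[OF p] split: atom.splits)
  then show "\<exists>p. p permutes {..<r} \<and> F = map_forest (perm_bound p) G"
    using permutes_inv[OF p] by auto
qed

lemma perm_eqv_trans: "perm_eqv r F G \<Longrightarrow> perm_eqv r G H \<Longrightarrow> perm_eqv r F H"
  unfolding perm_eqv_def
proof (elim exE conjE)
  fix p q assume p: "p permutes {..<r}" and G: "G = map_forest (perm_bound p) F"
     and q: "q permutes {..<r}" and H: "H = map_forest (perm_bound q) G"
  have "H = map_forest (perm_bound (q \<circ> p)) F"
    unfolding H G map_forest_comp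
    by (rule map_forest_cong) (auto simp: perm_bound_def split: atom.splits)
  then show "\<exists>p. p permutes {..<r} \<and> H = map_forest (perm_bound p) F"
    using permutes_compose[OF p q] by auto
qed

lemma map_gcap_perm_bound[simp]: "map_gcap (perm_bound p) (gcap_of_cap M) = gcap_of_cap M"
  by (cases M) auto

lemma perm_eqv_amb: "perm_eqv r F G \<Longrightarrow> perm_eqv r {#TAmb (FN m) F#} {#TAmb (FN m) G#}"
  unfolding perm_eqv_def by auto

lemma perm_eqv_act: "perm_eqv r F G \<Longrightarrow> perm_eqv r {#TAct (gcap_of_cap M) F#} {#TAct (gcap_of_cap M) G#}"
  unfolding perm_eqv_def by auto

lemma perm_eqv_bind: "perm_eqv r F G \<Longrightarrow> perm_eqv (Suc r) (map_forest (bind_free m r) F) (map_forest (bind_free m r) G)"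
  unfolding perm_eqv_def
proof (elim exE conjE)
  fix p assume p: "p permutes {..<r}" and G: "G = map_forest (perm_bound p) F"
  have pr: "p r = r" using p by (auto intro: permutes_not_in)
  have "map_forest (bind_free m r) G = map_forest (perm_bound p) (map_forest (bind_free m r) F)"
    unfolding G map_forest_comp
    by (rule map_forest_cong) (auto simp: perm_bound_def bind_free_def pr split: atom.splits)
  moreover have "p permutes {..<Suc r}" using p by (rule permutes_subset) auto
  ultimately show "\<exists>p. p permutes {..<Suc r} \<and> map_forest (bind_free m r) G = map_forest (perm_bound p) (map_forest (bind_free m r) F)"
    by auto
qed

lemma permutes_lessThan: "p permutes {..<r} \<Longrightarrow> i < r \<Longrightarrow> p i < r"
  by (metis lessThan_iff permutes_in_image)

lemma permutes_lessThan_add: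
  fixes r1 r2 :: nat
  assumes p1: "p1 permutes {..<r1}" and p2: "p2 permutes {..<r2}"
  shows "(\<lambda>i. if i < r1 then p1 i else if i < r1 + r2 then p2 (i - r1) + r1 else i) permutes {..<r1 + r2}"
    (is "?p permutes _")
proof (rule inj_imp_permutes)
  have inj: "inj p1" "inj p2" using p1 p2 permutes_inj by auto
  show "inj_on ?p {..<r1 + r2}"
  proof (rule inj_onI)
    fix x y assume xy: "x \<in> {..<r1 + r2}" "y \<in> {..<r1 + r2}" "?p x = ?p y"
    show "x = y"
    proof (cases "x < r1"; cases "y < r1")
      assume "x < r1" "y < r1" then show ?thesis using xy inj by (auto simp: inj_eq)
    next
      assume "x < r1" "\<not> y < r1" then show ?thesis using xy permutes_lessThan[OF p1, of x] by auto
    next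
      assume "\<not> x < r1" "y < r1" then show ?thesis using xy permutes_lessThan[OF p1, of y] by auto
    next
      assume ge: "\<not> x < r1" "\<not> y < r1"
      then have "p2 (x - r1) = p2 (y - r1)" using xy by auto
      then show ?thesis using ge inj(2) by (simp add: inj_eq)
    qed
  qed
  show "?p x \<in> {..<r1 + r2}" if "x \<in> {..<r1 + r2}" for x
    using that permutes_lessThan[OF p1] permutes_lessThan[OF p2] by (auto simp: trans_less_add1)
qed auto

lemma perm_eqv_par:
  assumes "perm_eqv r1 F1 G1" "perm_eqv r2 F2 G2" "bounded_by r1 F1"
  shows "perm_eqv (r1 + r2) (F1 + map_forest (shift_bound r1) F2) (G1 + map_forest (shift_bound r1) G2)"
proof -
  obtain p1 where p1: "p1 permutes {..<r1}" "G1 = map_forest (perm_bound p1) F1"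
    using assms(1) by (auto simp: perm_eqv_def)
  obtain p2 where p2: "p2 permutes {..<r2}" "G2 = map_forest (perm_bound p2) F2"
    using assms(2) by (auto simp: perm_eqv_def)
  define p where "p = (\<lambda>i. if i < r1 then p1 i else if i < r1 + r2 then p2 (i - r1) + r1 else i)"
  have "map_forest (perm_bound p) F1 = G1"
    unfolding p1(2)
    by (rule map_forest_cong) (use assms(3) in \<open>auto simp: p_def bounded_by_def perm_bound_def split: atom.splits\<close>)
  moreover have "map_forest (perm_bound p) (map_forest (shift_bound r1) F2) = map_forest (shift_bound r1) G2"
    unfolding p2(2) map_forest_comp
    by (rule map_forest_cong)
      (auto simp: p_def perm_bound_def shift_bound_def split: atom.splits intro: permutes_not_in[OF p2(1), symmetric])
  ultimately show ?thesis
    using permutes_lessThan_add[OF p1(1) p2(1)] unfolding perm_eqv_def p_def[symmetric]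
    by (intro exI[of _ p]) auto
qed

lemma perm_eqv_par_comm:
  assumes "bounded_by r1 F1" "bounded_by r2 F2"
  shows "perm_eqv (r1+r2) (F1 + map_forest (shift_bound r1) F2) (F2 + map_forest (shift_bound r2) F1)"
proof -
  define p where "p = (\<lambda>i. if i < r1 then i + r2 else if i < r1 + r2 then i - r1 else i)"
  have "p permutes {..<r1+r2}"
  proof (rule inj_imp_permutes)
    show "inj_on p {..<r1 + r2}"
      unfolding inj_on_def p_def by auto
  qed (auto simp: p_def)
  moreover have "map_forest (perm_bound p) F1 = map_forest (shift_bound r2) F1"
    by (rule map_forest_cong) (use assms(1) in \<open>auto simp: p_def bounded_by_def perm_bound_def shift_bound_def split: atom.splits\<close>)
  moreover have "map_forest (perm_bound p) (map_forest (shift_bound r1) F2) = F2" unfolding map_forest_comp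
    by (rule map_forest_idI) (use assms(2) in \<open>auto simp: p_def bounded_by_def perm_bound_def shift_bound_def split: atom.splits\<close>)
  ultimately show ?thesis unfolding perm_eqv_def by (intro exI[of _ p]) (auto simp: add_ac)
qed

lemma perm_eqv_bind_swap:
  assumes "bounded_by r F"
  shows "perm_eqv (Suc (Suc r)) (map_forest (bind_free n (Suc r)) (map_forest (bind_free m r) F))
           (map_forest (bind_free m (Suc r)) (map_forest (bind_free n r) F))"
proof (cases "n = m")
  case True
  have "map_forest (bind_free n (Suc r)) (map_forest (bind_free m r) F) = map_forest (bind_free m (Suc r)) (map_forest (bind_free n r) F)"
    unfolding map_forest_comp True by (rule map_forest_cong) (auto simp: bind_free_def)
  then show ?thesis by (simp add: perm_eqv_refl)
next
  case False
  have "map_forest (perm_bound (transpose r (Suc r))) (map_forest (bind_free n (Suc r)) (map_forest (bind_free m r) F))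
      = map_forest (bind_free m (Suc r)) (map_forest (bind_free n r) F)"
    unfolding map_forest_comp
    by (rule map_forest_cong) (use assms False in \<open>auto simp: bounded_by_def bind_free_def perm_bound_def split: atom.splits\<close>)
  moreover have "transpose r (Suc r) permutes {..<Suc (Suc r)}" by (rule permutes_swap_id) auto
  ultimately show ?thesis unfolding perm_eqv_def by (intro exI[of _ "transpose r (Suc r)"]) simp
qed

lemma shift_bound_comp[simp]: "shift_bound a \<circ> shift_bound b = shift_bound (a + b)"
  by (auto simp: fun_eq_iff shift_bound_def split: atom.splits)

lemma shift_bound_comp_FN[simp]: "shift_bound k \<circ> (FN \<circ> g) = FN \<circ> g"
  by (auto simp: fun_eq_iff)

lemma perm_eqv_map: "q permutes {..<r} \<Longrightarrow> perm_eqv r F (map_forest (perm_bound q) F)"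
  unfolding perm_eqv_def by auto

section \<open>Structural congruence preserves canonical forests\<close>

definition rename_free :: "name \<Rightarrow> name \<Rightarrow> atom \<Rightarrow> atom" where
  "rename_free n m x = (if x = FN n then FN m else x)"

lemma res_count_subst[simp]: "res_count (subst m n P) = res_count P"
  by (induction P) auto

lemma gcap_of_cap_subst: "gcap_of_cap (subst_cap m n M) = map_gcap (rename_free n m) (gcap_of_cap M)"
  by (cases M) (auto simp: rename_free_def rn_def)

lemma canon_subst: "m \<notin> names P \<Longrightarrow> canon (subst m n P) = map_forest (rename_free n m) (canon P)"
proof (induction P)
  case (Amb k P) then show ?case by (auto simp: rename_free_def rn_def)
next
  case (Act M P) then show ?case by (auto simp: gcap_of_cap_subst)
next
  case (Res k P)
  show ?case
  proof (cases "k = n")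
    case True then show ?thesis
      by (auto simp: map_forest_comp intro!: map_forest_cong[symmetric]) (auto simp: rename_free_def bind_free_def)
  next
    case False
    with Res have "k \<noteq> m" by auto
    with Res False show ?thesis
      by (auto simp: map_forest_comp intro!: map_forest_cong) (auto simp: rename_free_def bind_free_def)
  qed
next
  case (Par P Q) then show ?case
    by (auto simp: map_forest_comp intro!: map_forest_cong) (auto simp: rename_free_def shift_bound_def split: atom.splits)
qed auto

lemma scong_canon_perm_eqv:
  "scong P Q \<Longrightarrow> res_count P = res_count Q \<and> perm_eqv (res_count P) (canon P) (canon Q)"
proof (induction rule: scong.induct)
  case (sc_refl P) then show ?case by (simp add: perm_eqv_refl)
next
  case (sc_sym P Q) then show ?case by (auto intro: perm_eqv_sym)
next
  case (sc_trans P Q R) then show ?case by (auto intro: perm_eqv_trans)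
next
  case (sc_amb P Q n) then show ?case by (auto intro: perm_eqv_amb)
next
  case (sc_act P Q M) then show ?case by (auto intro: perm_eqv_act)
next
  case (sc_res P Q n) then show ?case by (auto intro: perm_eqv_bind)
next
  case (sc_par P P' Q Q')
  then have "perm_eqv (res_count P + res_count Q) (canon P + map_forest (shift_bound (res_count P)) (canon Q))
      (canon P' + map_forest (shift_bound (res_count P)) (canon Q'))"
    by (intro perm_eqv_par bounded_by_canon) auto
  then show ?case using sc_par by simp
next
  case (sc_par_comm P Q) then show ?case
    using perm_eqv_par_comm[OF bounded_by_canon bounded_by_canon] by (simp add: add.commute)
next
  case (sc_par_assoc P Q R) then show ?case
    by (simp add: perm_eqv_refl add_ac)
next
  case (sc_par_nil P) then show ?case by (simp add: perm_eqv_refl)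
next
  case (sc_res_res n m P) then show ?case using perm_eqv_bind_swap[OF bounded_by_canon, of P n m] by simp
next
  case (sc_res_par n P Q)
  have "map_forest (bind_free n (res_count P + res_count Q)) (canon P) = canon P"
    by (rule map_forest_idI) (use sc_res_par FN_in_canon_iff in \<open>auto simp: bind_free_def\<close>)
  moreover have "map_forest (bind_free n (res_count P + res_count Q)) (map_forest (shift_bound (res_count P)) (canon Q))
      = map_forest (shift_bound (res_count P)) (map_forest (bind_free n (res_count Q)) (canon Q))"
    unfolding map_forest_comp by (rule map_forest_cong) (auto simp: bind_free_def shift_bound_def split: atom.splits)
  ultimately show ?case by (simp add: perm_eqv_refl)
next
  case (sc_res_amb n m P) then show ?case by (simp add: perm_eqv_refl)
next
  case (sc_res_act n M P) then show ?case by (cases M) (auto simp: perm_eqv_refl)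
next
  case (sc_alpha m P n)
  have fm: "FN m \<notin> set_forest (canon P)" using sc_alpha FN_in_canon_iff fn_names by blast
  have "map_forest (bind_free m (res_count P)) (map_forest (rename_free n m) (canon P)) = map_forest (bind_free n (res_count P)) (canon P)"
    unfolding map_forest_comp by (rule map_forest_cong) (use fm in \<open>auto simp: bind_free_def rename_free_def\<close>)
  then show ?case using sc_alpha by (simp add: canon_subst perm_eqv_refl)
qed

lemma perm_eqv_FN_iff: "perm_eqv r F G \<Longrightarrow> FN a \<in> set_forest F \<longleftrightarrow> FN a \<in> set_forest G"
  by (auto simp: perm_eqv_def FN_in_perm_bound)

lemma fn_scong: "scong X Y \<Longrightarrow> fn X = fn Y"
proof -
  assume "scong X Y"
  from scong_canon_perm_eqv[OF this] have "perm_eqv (res_count X) (canon X) (canon Y)" by auto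
  then show ?thesis using perm_eqv_FN_iff FN_in_canon_iff by blast
qed

section \<open>Reduction on forests\<close>

text \<open>Forests have no parallel composition or restriction left, so the only context rule is \<open>fs_amb\<close>.\<close>

inductive forest_step :: "forest \<Rightarrow> forest \<Rightarrow> bool" where
  fs_open: "forest_step (add_mset (TAct (COpen a) G) (add_mset (TAmb a H) R)) (G + H + R)"
| fs_in: "forest_step (add_mset (TAmb a (add_mset (TAct (CIn b) G) H)) (add_mset (TAmb b K) R))
                (add_mset (TAmb b (add_mset (TAmb a (G + H)) K)) R)"
| fs_out: "forest_step (add_mset (TAmb b (add_mset (TAmb a (add_mset (TAct (COut b) G) H)) K)) R)
                 (add_mset (TAmb a (G + H)) (add_mset (TAmb b K) R))"
| fs_amb: "forest_step G G' \<Longrightarrow> forest_step (add_mset (TAmb a G) R) (add_mset (TAmb a G') R)"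

lemma forest_step_map: "forest_step F G \<Longrightarrow> forest_step (map_forest f F) (map_forest f G)"
proof (induction rule: forest_step.induct)
  case (fs_open a G H R) then show ?case using forest_step.fs_open by simp
next
  case (fs_in a b G H K R) then show ?case using forest_step.fs_in by simp
next
  case (fs_out b a G H K R) then show ?case using forest_step.fs_out by simp
next
  case (fs_amb G G' a R) then show ?case using forest_step.fs_amb by simp
qed

lemma forest_step_frame: "forest_step F G \<Longrightarrow> forest_step (F + S) (G + S)"
proof (induction rule: forest_step.induct)
  case (fs_open a G H R) then show ?case using forest_step.fs_open[of a G H "R + S"] by (simp add: add_ac)
next
  case (fs_in a b G H K R) then show ?case using forest_step.fs_in[of a b G H K "R + S"] by simp
next
  case (fs_out b a G H K R) then show ?case using forest_step.fs_out[of b a G H K "R + S"] by simp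
next
  case (fs_amb G G' a R) then show ?case using forest_step.fs_amb[of G G' a "R + S"] by simp
qed

lemma forest_step_set_forest: "forest_step F G \<Longrightarrow> set_forest G \<subseteq> set_forest F"
  by (induction rule: forest_step.induct) auto

lemma red_forest_step:
  "red P Q \<Longrightarrow>
     res_count Q = res_count P \<and> (\<exists>G. forest_step (canon P) G \<and> perm_eqv (res_count P) G (canon Q))"
proof (induction rule: red.induct)
  case (red_in n m P Q R)
  have "forest_step (canon (Par (Amb n (Par (Act (In m) P) Q)) (Amb m R))) (canon (Amb m (Par (Amb n (Par P Q)) R)))"
    using forest_step.fs_in[of "FN n" "FN m" "canon P" "map_forest (shift_bound (res_count P)) (canon Q)"
        "map_forest (shift_bound (res_count P + res_count Q)) (canon R)" "{#}"]
    by (simp add: add_mset_commute)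
  then show ?case by (auto intro: perm_eqv_refl)
next
  case (red_out m n P Q R)
  have "forest_step (canon (Amb m (Par (Amb n (Par (Act (Out m) P) Q)) R))) (canon (Par (Amb n (Par P Q)) (Amb m R)))"
    using forest_step.fs_out[of "FN m" "FN n" "canon P" "map_forest (shift_bound (res_count P)) (canon Q)"
        "map_forest (shift_bound (res_count P + res_count Q)) (canon R)" "{#}"]
    by (simp add: add_mset_commute)
  then show ?case by (auto intro: perm_eqv_refl)
next
  case (red_open n P Q)
  have "forest_step (canon (Par (Act (Open n) P) (Amb n Q))) (canon (Par P Q))"
    using forest_step.fs_open[of "FN n" "canon P" "map_forest (shift_bound (res_count P)) (canon Q)" "{#}"]
    by (simp add: add_mset_commute)
  then show ?case by (auto intro: perm_eqv_refl)
next
  case (red_res P Q n)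
  then obtain G where G: "forest_step (canon P) G" "perm_eqv (res_count P) G (canon Q)" by auto
  then show ?case using red_res forest_step_map[OF G(1), of "bind_free n (res_count P)"] perm_eqv_bind[OF G(2), of n] by auto
next
  case (red_amb P Q n)
  then obtain G where G: "forest_step (canon P) G" "perm_eqv (res_count P) G (canon Q)" by auto
  then show ?case using red_amb forest_step.fs_amb[OF G(1), of "FN n" "{#}"] perm_eqv_amb[OF G(2), of n] by auto
next
  case (red_par P Q R)
  then obtain G where G: "forest_step (canon P) G" "perm_eqv (res_count P) G (canon Q)" by auto
  have w: "bounded_by (res_count P) G" using forest_step_set_forest[OF G(1)] bounded_by_canon[of P] by (auto simp: bounded_by_def)
  show ?case using red_par forest_step_frame[OF G(1)] perm_eqv_par[OF G(2) perm_eqv_refl w] by auto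
next
  case (red_scong P P' Q' Q)
  then obtain G where G: "forest_step (canon P') G" "perm_eqv (res_count P') G (canon Q')" by auto
  have c1: "res_count P = res_count P'" "perm_eqv (res_count P) (canon P') (canon P)" using scong_canon_perm_eqv[OF red_scong(1)] perm_eqv_sym by auto
  have c2: "res_count Q' = res_count Q" "perm_eqv (res_count Q') (canon Q') (canon Q)" using scong_canon_perm_eqv[OF red_scong(3)] by auto
  obtain q where q: "q permutes {..<res_count P}" "canon P = map_forest (perm_bound q) (canon P')" using c1(2) by (auto simp: perm_eqv_def)
  have "forest_step (canon P) (map_forest (perm_bound q) G)" using forest_step_map[OF G(1)] q by simp
  moreover have "perm_eqv (res_count P) (map_forest (perm_bound q) G) (canon Q)"
    using perm_eqv_sym[OF perm_eqv_map[OF q(1), of G]] G(2) c1 c2 red_scong by (auto intro: perm_eqv_trans)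
  ultimately show ?case using c1 c2 red_scong by auto
qed

declare sc_trans[trans]

lemma sc_parL: "scong P P' \<Longrightarrow> scong (Par P Q) (Par P' Q)"
  by (rule sc_par) (auto intro: sc_refl)

lemma sc_parR: "scong Q Q' \<Longrightarrow> scong (Par P Q) (Par P Q')"
  by (rule sc_par) (auto intro: sc_refl)

lemma sc_par_left_comm: "scong (Par A (Par B C)) (Par B (Par A C))"
proof -
  have "scong (Par A (Par B C)) (Par (Par A B) C)" by (rule sc_sym, rule sc_par_assoc)
  also have "scong \<dots> (Par (Par B A) C)" by (rule sc_parL, rule sc_par_comm)
  also have "scong \<dots> (Par B (Par A C))" by (rule sc_par_assoc)
  finally show ?thesis .
qed

lemma sc_nil_par: "scong (Par Nil P) P"
  using sc_trans[OF sc_par_comm sc_par_nil] .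

lemma resl_append: "resl (A @ B) X = resl A (resl B X)"
  by (induction A) auto

lemma resl_cong: "scong X Y \<Longrightarrow> scong (resl A X) (resl A Y)"
  by (induction A) (auto intro: sc_res)

lemma fn_resl[simp]: "fn (resl A X) = fn X - set A"
  by (induction A) auto

lemma names_resl[simp]: "names (resl A X) = names X \<union> set A"
  by (induction A) auto

lemma res_count_resl[simp]: "res_count (resl A X) = res_count X + length A"
  by (induction A) auto

lemma sc_amb_resl: "m \<notin> set A \<Longrightarrow> scong (Amb m (resl A X)) (resl A (Amb m X))"
proof (induction A)
  case (Cons a A)
  have "scong (Amb m (Res a (resl A X))) (Res a (Amb m (resl A X)))"
    by (rule sc_sym, rule sc_res_amb) (use Cons.prems in auto)
  also have "scong \<dots> (Res a (resl A (Amb m X)))" using Cons by (intro sc_res) auto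
  finally show ?case by simp
qed (auto intro: sc_refl)

lemma sc_act_resl: "set A \<inter> fn_cap M = {} \<Longrightarrow> scong (Act M (resl A X)) (resl A (Act M X))"
proof (induction A)
  case (Cons a A)
  have "scong (Act M (Res a (resl A X))) (Res a (Act M (resl A X)))"
    by (rule sc_sym, rule sc_res_act) (use Cons.prems in auto)
  also have "scong \<dots> (Res a (resl A (Act M X)))" using Cons by (intro sc_res) auto
  finally show ?case by simp
qed (auto intro: sc_refl)

lemma sc_par_resl: "set A \<inter> fn R = {} \<Longrightarrow> scong (Par R (resl A X)) (resl A (Par R X))"
proof (induction A)
  case (Cons a A)
  have "scong (Par R (Res a (resl A X))) (Res a (Par R (resl A X)))"
    by (rule sc_sym, rule sc_res_par) (use Cons.prems in auto)
  also have "scong \<dots> (Res a (resl A (Par R X)))" using Cons by (intro sc_res) auto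
  finally show ?case by simp
qed (auto intro: sc_refl)

lemma sc_par_resl_left: "set A \<inter> fn R = {} \<Longrightarrow> scong (Par (resl A X) R) (resl A (Par X R))"
proof -
  assume a: "set A \<inter> fn R = {}"
  have "scong (Par (resl A X) R) (Par R (resl A X))" by (rule sc_par_comm)
  also have "scong \<dots> (resl A (Par R X))" using a by (rule sc_par_resl)
  also have "scong \<dots> (resl A (Par X R))" by (rule resl_cong, rule sc_par_comm)
  finally show ?thesis .
qed

lemma subst_resl: "m \<notin> set A \<Longrightarrow> subst c m (resl A X) = resl A (subst c m X)"
  by (induction A) auto

lemma sc_res_resl: "scong (Res a (resl A W)) (resl A (Res a W))"
proof (induction A)
  case Nil then show ?case by (simp add: sc_refl)
next
  case (Cons b A)
  have "scong (Res a (Res b (resl A W))) (Res b (Res a (resl A W)))" by (rule sc_res_res)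
  also have "scong \<dots> (Res b (resl A (Res a W)))" using Cons by (rule sc_res)
  finally show ?case by simp
qed

lemma sc_resl_perm: "mset A = mset A' \<Longrightarrow> scong (resl A Z) (resl A' Z)"
proof (induction A arbitrary: A')
  case Nil then show ?case by (simp add: sc_refl)
next
  case (Cons a A)
  then have "a \<in> set A'" by (metis list.set_intros(1) set_mset_mset)
  then obtain A1 A2 where A': "A' = A1 @ a # A2" by (meson split_list)
  with Cons have "mset A = mset (A1 @ A2)" by simp
  then have "scong (resl A Z) (resl (A1 @ A2) Z)" using Cons by blast
  then have "scong (Res a (resl A Z)) (Res a (resl A1 (resl A2 Z)))" by (simp add: resl_append sc_res)
  also have "scong \<dots> (resl A1 (Res a (resl A2 Z)))" by (rule sc_res_resl)
  finally show ?case by (simp add: A' resl_append)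
qed

lemma red_resl: "red X Y \<Longrightarrow> red (resl A X) (resl A Y)"
  by (induction A) (auto intro: red_res)

definition bind_range :: "nat \<Rightarrow> nat \<Rightarrow> nat \<Rightarrow> atom \<Rightarrow> atom" where
  "bind_range N0 m r x = (case x of FN a \<Rightarrow> if N0 \<le> a \<and> a < N0 + m then BN (r + (a - N0)) else FN a | BN i \<Rightarrow> BN i)"

lemma canon_resl_fresh: "canon (resl (rev [N0..<N0+m]) Z) = map_forest (bind_range N0 m (res_count Z)) (canon Z)"
proof (induction m)
  case 0 show ?case by (simp, rule map_forest_idI[symmetric]) (auto simp: bind_range_def split: atom.splits)
next
  case (Suc m)
  have "canon (resl (rev [N0..<N0 + Suc m]) Z) = map_forest (bind_free (N0 + m) (res_count Z + m)) (canon (resl (rev [N0..<N0+m]) Z))"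
    by simp
  also have "\<dots> = map_forest (bind_range N0 (Suc m) (res_count Z)) (canon Z)"
    unfolding Suc map_forest_comp
    by (rule map_forest_cong) (auto simp: bind_range_def bind_free_def split: atom.splits)
  finally show ?case .
qed

fun cap_of_gcap :: "name gcap \<Rightarrow> cap" where
  "cap_of_gcap (CIn a) = In a"
| "cap_of_gcap (COut a) = Out a"
| "cap_of_gcap (COpen a) = Open a"

text \<open>Any enumeration of the multiset will do: they are all structurally congruent.\<close>

definition par_mset :: "proc multiset \<Rightarrow> proc" where
  "par_mset M = foldr Par (SOME xs. mset xs = M) Nil"

primrec proc_of_tree :: "name tree \<Rightarrow> proc" where
  "proc_of_tree (TAmb a M) = Amb a (par_mset (image_mset proc_of_tree M))"
| "proc_of_tree (TAct c M) = Act (cap_of_gcap c) (par_mset (image_mset proc_of_tree M))"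

definition proc_of_forest :: "name tree multiset \<Rightarrow> proc" where
  "proc_of_forest M = par_mset (image_mset proc_of_tree M)"

lemma proc_of_tree_simps:
  "proc_of_tree (TAmb a M) = Amb a (proc_of_forest M)"
  "proc_of_tree (TAct c M) = Act (cap_of_gcap c) (proc_of_forest M)"
  by (auto simp: proc_of_forest_def)

lemma mset_some_list: "mset (SOME xs. mset xs = M) = M"
  by (metis (mono_tags, lifting) ex_mset someI_ex)

lemma sc_foldr_move: "scong (foldr Par (ys1 @ x # ys2) Nil) (Par x (foldr Par (ys1 @ ys2) Nil))"
proof (induction ys1)
  case Nil then show ?case by (auto intro: sc_refl)
next
  case (Cons y ys1)
  have "scong (Par y (foldr Par (ys1 @ x # ys2) Nil)) (Par y (Par x (foldr Par (ys1 @ ys2) Nil)))"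
    using Cons by (rule sc_parR)
  also have "scong \<dots> (Par x (Par y (foldr Par (ys1 @ ys2) Nil)))" by (rule sc_par_left_comm)
  finally show ?case by simp
qed

lemma sc_foldr_perm: "mset xs = mset ys \<Longrightarrow> scong (foldr Par xs Nil) (foldr Par ys Nil)"
proof (induction xs arbitrary: ys)
  case Nil then show ?case by (auto intro: sc_refl)
next
  case (Cons x xs)
  then have "x \<in> set ys" by (metis list.set_intros(1) set_mset_mset)
  then obtain ys1 ys2 where ys: "ys = ys1 @ x # ys2" by (meson split_list)
  with Cons have "mset xs = mset (ys1 @ ys2)" by simp
  then have "scong (foldr Par xs Nil) (foldr Par (ys1 @ ys2) Nil)" using Cons by blast
  then have "scong (Par x (foldr Par xs Nil)) (Par x (foldr Par (ys1 @ ys2) Nil))" by (rule sc_parR)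
  also have "scong \<dots> (foldr Par ys Nil)" unfolding ys by (rule sc_sym, rule sc_foldr_move)
  finally show ?case by simp
qed

lemma sc_foldr_append: "scong (foldr Par (xs @ ys) Nil) (Par (foldr Par xs Nil) (foldr Par ys Nil))"
proof (induction xs)
  case Nil then show ?case by (simp add: sc_sym[OF sc_nil_par])
next
  case (Cons x xs)
  have "scong (Par x (foldr Par (xs @ ys) Nil)) (Par x (Par (foldr Par xs Nil) (foldr Par ys Nil)))"
    using Cons by (rule sc_parR)
  also have "scong \<dots> (Par (Par x (foldr Par xs Nil)) (foldr Par ys Nil))" by (rule sc_sym, rule sc_par_assoc)
  finally show ?case by simp
qed

lemma sc_foldr_pointwise:
  "(\<And>x. x \<in> set xs \<Longrightarrow> scong (f x) (g x)) \<Longrightarrow> scong (foldr Par (map f xs) Nil) (foldr Par (map g xs) Nil)"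
  by (induction xs) (auto intro: sc_refl sc_par)

lemma par_mset_foldr: "mset xs = M \<Longrightarrow> scong (par_mset M) (foldr Par xs Nil)"
  unfolding par_mset_def by (rule sc_foldr_perm) (simp add: mset_some_list)

lemma par_mset_union: "scong (par_mset (M + N)) (Par (par_mset M) (par_mset N))"
proof -
  obtain xs ys where xs: "mset xs = M" and ys: "mset ys = N" by (meson ex_mset)
  have "scong (par_mset (M + N)) (foldr Par (xs @ ys) Nil)" using xs ys by (intro par_mset_foldr) simp
  also have "scong \<dots> (Par (foldr Par xs Nil) (foldr Par ys Nil))" by (rule sc_foldr_append)
  also have "scong \<dots> (Par (par_mset M) (par_mset N))"
    using sc_par[OF sc_sym[OF par_mset_foldr[OF xs]] sc_sym[OF par_mset_foldr[OF ys]]] .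
  finally show ?thesis .
qed

lemma par_mset_single: "scong (par_mset {#P#}) P"
proof -
  have "scong (par_mset {#P#}) (foldr Par [P] Nil)" by (rule par_mset_foldr) simp
  then show ?thesis using sc_par_nil sc_trans by fastforce
qed

lemma par_mset_add: "scong (par_mset (add_mset P M)) (Par P (par_mset M))"
proof -
  have "scong (par_mset ({#P#} + M)) (Par (par_mset {#P#}) (par_mset M))" by (rule par_mset_union)
  also have "scong \<dots> (Par P (par_mset M))" by (rule sc_parL, rule par_mset_single)
  finally show ?thesis by simp
qed

lemma par_mset_pointwise:
  assumes "\<And>x. x \<in># M \<Longrightarrow> scong (f x) (g x)"
  shows "scong (par_mset (image_mset f M)) (par_mset (image_mset g M))"
proof -
  obtain xs where xs: "mset xs = M" by (meson ex_mset)
  have "scong (par_mset (image_mset f M)) (foldr Par (map f xs) Nil)" using xs by (intro par_mset_foldr) simp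
  also have "scong \<dots> (foldr Par (map g xs) Nil)" using assms xs by (intro sc_foldr_pointwise) auto
  also have "scong \<dots> (par_mset (image_mset g M))" using xs by (intro par_mset_foldr[THEN sc_sym]) simp
  finally show ?thesis .
qed

lemma proc_of_forest_empty[simp]: "proc_of_forest {#} = Nil"
  by (simp add: proc_of_forest_def par_mset_def)

lemma proc_of_forest_union: "scong (proc_of_forest (M + N)) (Par (proc_of_forest M) (proc_of_forest N))"
  unfolding proc_of_forest_def using par_mset_union by simp

lemma proc_of_forest_add: "scong (proc_of_forest (add_mset t M)) (Par (proc_of_tree t) (proc_of_forest M))"
  unfolding proc_of_forest_def using par_mset_add by simp

lemma proc_of_forest_single: "scong (proc_of_forest {#t#}) (proc_of_tree t)"
  unfolding proc_of_forest_def using par_mset_single by simp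

lemma names_par_mset: "names (par_mset M) = \<Union> (names ` set_mset M)"
proof -
  have "names (foldr Par xs Nil) = \<Union> (names ` set xs)" for xs by (induction xs) auto
  then show ?thesis unfolding par_mset_def by (metis set_mset_mset mset_some_list)
qed

lemma fn_par_mset: "fn (par_mset M) = \<Union> (fn ` set_mset M)"
proof -
  have "fn (foldr Par xs Nil) = \<Union> (fn ` set xs)" for xs by (induction xs) auto
  then show ?thesis unfolding par_mset_def by (metis set_mset_mset mset_some_list)
qed

lemma fn_cap_cap_of_gcap[simp]: "fn_cap (cap_of_gcap c) = set_gcap c"
  by (cases c) auto

lemma names_fn_proc_of_tree: "names (proc_of_tree t) = set_tree t \<and> fn (proc_of_tree t) = set_tree t"
  by (induction t) (auto simp: names_par_mset fn_par_mset set_forest_def)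

lemma names_proc_of_forest: "names (proc_of_forest M) = set_forest M"
  and fn_proc_of_forest: "fn (proc_of_forest M) = set_forest M"
  unfolding proc_of_forest_def names_par_mset fn_par_mset set_forest_def
  by (auto simp: names_fn_proc_of_tree)

lemma subst_par_mset: "scong (subst c d (par_mset K)) (par_mset (image_mset (subst c d) K))"
proof -
  have "subst c d (foldr Par xs Nil) = foldr Par (map (subst c d) xs) Nil" for xs
    by (induction xs) auto
  then have "subst c d (par_mset K) = foldr Par (map (subst c d) (SOME xs. mset xs = K)) Nil"
    unfolding par_mset_def .
  also have "scong \<dots> (par_mset (image_mset (subst c d) K))"
    by (rule sc_sym, rule par_mset_foldr) (simp add: mset_some_list)
  finally show ?thesis .
qed

lemma subst_cap_of_gcap: "subst_cap c d (cap_of_gcap x) = cap_of_gcap (map_gcap (rn c d) x)"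
  by (cases x) auto

lemma subst_proc_of_forest_pointwise:
  assumes "\<And>t. t \<in># M \<Longrightarrow> scong (subst c d (proc_of_tree t)) (proc_of_tree (map_tree (rn c d) t))"
  shows "scong (subst c d (proc_of_forest M)) (proc_of_forest (map_forest (rn c d) M))"
proof -
  have "scong (subst c d (proc_of_forest M)) (par_mset (image_mset (subst c d) (image_mset proc_of_tree M)))"
    unfolding proc_of_forest_def by (rule subst_par_mset)
  also have "scong \<dots> (par_mset (image_mset (proc_of_tree \<circ> map_tree (rn c d)) M))"
    unfolding image_mset.compositionality using assms by (intro par_mset_pointwise) auto
  finally show ?thesis by (simp add: proc_of_forest_def map_forest_def image_mset.compositionality)
qed

lemma subst_proc_of_tree: "scong (subst c d (proc_of_tree t)) (proc_of_tree (map_tree (rn c d) t))"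
proof (induction t)
  case (TAmb a M)
  then have "scong (subst c d (proc_of_forest M)) (proc_of_forest (map_forest (rn c d) M))"
    by (rule subst_proc_of_forest_pointwise)
  then show ?case by (auto simp: proc_of_forest_def intro: sc_amb)
next
  case (TAct x M)
  then have "scong (subst c d (proc_of_forest M)) (proc_of_forest (map_forest (rn c d) M))"
    by (rule subst_proc_of_forest_pointwise)
  then show ?case by (auto simp: proc_of_forest_def subst_cap_of_gcap intro: sc_act)
qed

lemma subst_proc_of_forest: "scong (subst c d (proc_of_forest M)) (proc_of_forest (map_forest (rn c d) M))"
  by (rule subst_proc_of_forest_pointwise, rule subst_proc_of_tree)

lemma canon_par_mset:
  assumes "\<And>P. P \<in># K \<Longrightarrow> res_count P = 0"
  shows "res_count (par_mset K) = 0 \<and> canon (par_mset K) = sum_mset (image_mset canon K)"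
proof -
  define xs where "xs = (SOME xs. mset xs = K)"
  have xs: "mset xs = K" unfolding xs_def by (rule mset_some_list)
  have "\<forall>P\<in>set xs. res_count P = 0" using assms xs by auto
  then have "res_count (foldr Par xs Nil) = 0 \<and> canon (foldr Par xs Nil) = sum_list (map canon xs)"
    by (induction xs) auto
  moreover have "sum_list (map canon xs) = sum_mset (image_mset canon K)"
    using xs by (metis mset_map sum_mset_sum_list)
  ultimately show ?thesis unfolding par_mset_def xs_def[symmetric] by simp
qed

lemma canon_proc_of_forest_pointwise:
  assumes "\<And>t. t \<in># M \<Longrightarrow> res_count (proc_of_tree t) = 0 \<and> canon (proc_of_tree t) = {#map_tree FN t#}"
  shows "res_count (proc_of_forest M) = 0 \<and> canon (proc_of_forest M) = map_forest FN M"
proof -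
  have "res_count (proc_of_forest M) = 0 \<and>
      canon (proc_of_forest M) = sum_mset (image_mset canon (image_mset proc_of_tree M))"
    unfolding proc_of_forest_def using assms by (intro canon_par_mset) auto
  moreover have "sum_mset (image_mset canon (image_mset proc_of_tree M)) = map_forest FN M"
    using assms by (induction M) auto
  ultimately show ?thesis by simp
qed

lemma canon_proc_of_tree: "res_count (proc_of_tree t) = 0 \<and> canon (proc_of_tree t) = {#map_tree FN t#}"
proof (induction t)
  case (TAmb a M)
  then show ?case using canon_proc_of_forest_pointwise[of M] unfolding proc_of_tree_simps by simp
next
  case (TAct c M)
  moreover have "gcap_of_cap (cap_of_gcap c) = map_gcap FN c" by (cases c) auto
  ultimately show ?case using canon_proc_of_forest_pointwise[of M] unfolding proc_of_tree_simps by simp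
qed

lemma canon_proc_of_forest: "res_count (proc_of_forest M) = 0 \<and> canon (proc_of_forest M) = map_forest FN M"
  by (rule canon_proc_of_forest_pointwise, rule canon_proc_of_tree)

section \<open>Normal forms and completeness\<close>

definition ground :: "nat \<Rightarrow> atom \<Rightarrow> name" where
  "ground N x = (case x of FN a \<Rightarrow> a | BN i \<Rightarrow> N + i)"

lemma ground_simps[simp]: "ground N (FN a) = a" "ground N (BN i) = N + i"
  by (auto simp: ground_def)

text \<open>
  Index i is realised as the name N + i, under restrictions of N, ..., N + r - 1; when N exceeds
  all names of the process, no capture can occur.
\<close>

definition normal_form :: "nat \<Rightarrow> nat \<Rightarrow> forest \<Rightarrow> proc" where
  "normal_form N r F = resl (rev [N..<N+r]) (proc_of_forest (map_forest (ground N) F))"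

lemma cap_of_gcap_ground: "cap_of_gcap (map_gcap (ground N) (gcap_of_cap M)) = M"
  by (cases M) auto

lemma set_forest_ground_canon:
  "(\<forall>a\<in>names P. a < N) \<Longrightarrow> x \<in> set_forest (map_forest (ground N) (canon P)) \<Longrightarrow>
     x < N + res_count P \<and> (x < N \<longrightarrow> x \<in> fn P)"
proof -
  assume a: "\<forall>a\<in>names P. a < N" and x: "x \<in> set_forest (map_forest (ground N) (canon P))"
  then obtain y where y: "y \<in> set_forest (canon P)" "x = ground N y" by auto
  show ?thesis
  proof (cases y)
    case (FN b) then show ?thesis using y a FN_in_canon_iff[of b P] fn_names[of P] by force
  next
    case (BN i) then show ?thesis using y BN_in_canon[of i P] by auto
  qed
qed

lemma sc_Res_normal_form:
  assumes nP: "\<forall>a\<in>names P. a < N" and mN: "m < N"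
  shows "scong (Res m (normal_form N (res_count P) (canon P))) (normal_form N (res_count (Res m P)) (canon (Res m P)))"
proof -
  let ?r = "res_count P"
  let ?Bs = "rev [N..<N + ?r]" and ?X = "proc_of_forest (map_forest (ground N) (canon P))"
  have "Res m (normal_form N ?r (canon P)) = Res m (resl ?Bs ?X)" by (simp add: normal_form_def)
  also have "scong \<dots> (Res (N + ?r) (subst (N + ?r) m (resl ?Bs ?X)))"
  proof (rule sc_alpha)
    show "N + ?r \<notin> names (resl ?Bs ?X)"
      using set_forest_ground_canon[OF nP] by (auto simp: names_proc_of_forest)
  qed
  also have "subst (N + ?r) m (resl ?Bs ?X) = resl ?Bs (subst (N + ?r) m ?X)"
    using mN by (intro subst_resl) auto
  also have "scong (Res (N + ?r) (resl ?Bs (subst (N + ?r) m ?X)))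
      (Res (N + ?r) (resl ?Bs (proc_of_forest (map_forest (rn (N + ?r) m) (map_forest (ground N) (canon P))))))"
    by (intro sc_res resl_cong subst_proc_of_forest)
  also have "map_forest (rn (N + ?r) m) (map_forest (ground N) (canon P))
      = map_forest (ground N) (map_forest (bind_free m ?r) (canon P))"
    unfolding map_forest_comp
  proof (rule map_forest_cong)
    fix x assume "x \<in> set_forest (canon P)"
    then show "(rn (N + ?r) m \<circ> ground N) x = (ground N \<circ> bind_free m ?r) x"
      using mN by (cases x) (auto simp: rn_def bind_free_def)
  qed
  finally show ?thesis by (simp add: normal_form_def)
qed

lemma sc_Par_normal_form:
  assumes nP: "\<forall>a\<in>names P. a < N" and nQ: "\<forall>a\<in>names Q. a < N"
  shows "scong (Par (normal_form N (res_count P) (canon P)) (normal_form (N + res_count P) (res_count Q) (canon Q)))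
      (normal_form N (res_count (Par P Q)) (canon (Par P Q)))"
proof -
  let ?rP = "res_count P" and ?rQ = "res_count Q"
  let ?BP = "rev [N..<N + ?rP]" and ?BQ = "rev [N + ?rP..<N + ?rP + ?rQ]"
  let ?XP = "proc_of_forest (map_forest (ground N) (canon P))"
  let ?XQ = "proc_of_forest (map_forest (ground (N + ?rP)) (canon Q))"
  have nQ': "\<forall>a\<in>names Q. a < N + ?rP" using nQ by (auto simp: trans_less_add1)
  have "Par (normal_form N ?rP (canon P)) (normal_form (N + ?rP) ?rQ (canon Q)) = Par (resl ?BP ?XP) (resl ?BQ ?XQ)"
    by (simp add: normal_form_def)
  also have "scong \<dots> (resl ?BQ (Par (resl ?BP ?XP) ?XQ))"
    by (rule sc_par_resl) (use set_forest_ground_canon[OF nP] in \<open>auto simp: fn_proc_of_forest\<close>)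
  also have "scong \<dots> (resl ?BQ (resl ?BP (Par ?XP ?XQ)))"
  proof (rule resl_cong, rule sc_par_resl_left)
    have "x < N \<or> N + ?rP \<le> x" if "x \<in> set_forest (map_forest (ground (N + ?rP)) (canon Q))" for x
    proof -
      have "x < N + ?rP \<longrightarrow> x \<in> fn Q" using set_forest_ground_canon[OF nQ' that] by auto
      moreover have "\<forall>a\<in>fn Q. a < N" using nQ fn_names[of Q] by auto
      ultimately show ?thesis by force
    qed
    then show "set ?BP \<inter> fn ?XQ = {}" by (force simp: fn_proc_of_forest)
  qed
  also have "scong \<dots> (resl ?BQ (resl ?BP (proc_of_forest (map_forest (ground N) (canon P) + map_forest (ground (N + ?rP)) (canon Q)))))"
    by (rule resl_cong, rule resl_cong, rule sc_sym, rule proc_of_forest_union)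
  also have "map_forest (ground (N + ?rP)) (canon Q) = map_forest (ground N) (map_forest (shift_bound ?rP) (canon Q))"
    unfolding map_forest_comp by (rule map_forest_cong) (auto simp: ground_def shift_bound_def split: atom.splits)
  also have "rev [N..<N + (?rP + ?rQ)] = ?BQ @ ?BP"
    by (metis add.assoc le_add1 rev_append upt_add_eq_append)
  then have "resl ?BQ (resl ?BP (proc_of_forest (map_forest (ground N) (canon P) + map_forest (ground N) (map_forest (shift_bound ?rP) (canon Q)))))
     = normal_form N (res_count (Par P Q)) (canon (Par P Q))"
    by (simp add: normal_form_def resl_append)
  finally show ?thesis .
qed

theorem scong_normal_form: "(\<forall>a\<in>names P. a < N) \<Longrightarrow> scong P (normal_form N (res_count P) (canon P))"
proof (induction P arbitrary: N)
  case Nil then show ?case by (simp add: normal_form_def sc_refl)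
next
  case (Amb m P)
  let ?Bs = "rev [N..<N + res_count P]" and ?X = "proc_of_forest (map_forest (ground N) (canon P))"
  have "scong (Amb m P) (Amb m (resl ?Bs ?X))" using Amb by (auto simp: normal_form_def intro: sc_amb)
  also have "scong \<dots> (resl ?Bs (Amb m ?X))" using Amb.prems by (intro sc_amb_resl) auto
  also have "scong \<dots> (resl ?Bs (proc_of_forest {#TAmb m (map_forest (ground N) (canon P))#}))"
    by (rule resl_cong, rule sc_sym) (metis proc_of_forest_single proc_of_tree_simps(1))
  finally show ?case by (simp add: normal_form_def)
next
  case (Act M P)
  let ?Bs = "rev [N..<N + res_count P]" and ?X = "proc_of_forest (map_forest (ground N) (canon P))"
  have fm: "\<forall>a\<in>fn_cap M. a < N" using Act.prems by simp
  have "scong (Act M P) (Act M (resl ?Bs ?X))" using Act by (auto simp: normal_form_def intro: sc_act)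
  also have "scong \<dots> (resl ?Bs (Act M ?X))" using fm by (intro sc_act_resl) fastforce
  also have "scong \<dots> (resl ?Bs (proc_of_forest {#TAct (map_gcap (ground N) (gcap_of_cap M)) (map_forest (ground N) (canon P))#}))"
    by (rule resl_cong, rule sc_sym) (metis proc_of_forest_single proc_of_tree_simps(2) cap_of_gcap_ground)
  finally show ?case by (simp add: normal_form_def)
next
  case (Res m P)
  then have "scong (Res m P) (Res m (normal_form N (res_count P) (canon P)))" by (auto intro: sc_res)
  also have "scong \<dots> (normal_form N (res_count (Res m P)) (canon (Res m P)))"
    using Res.prems by (intro sc_Res_normal_form) auto
  finally show ?case .
next
  case (Par P Q)
  then have "scong (Par P Q) (Par (normal_form N (res_count P) (canon P)) (normal_form (N + res_count P) (res_count Q) (canon Q)))"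
    by (auto simp: trans_less_add1 intro: sc_par)
  also have "scong \<dots> (normal_form N (res_count (Par P Q)) (canon (Par P Q)))"
    using Par.prems by (intro sc_Par_normal_form) auto
  finally show ?case .
qed

definition inst_bound :: "name list \<Rightarrow> (nat \<Rightarrow> name) \<Rightarrow> nat \<Rightarrow> atom \<Rightarrow> name" where
  "inst_bound L t0 k x = (case x of FN a \<Rightarrow> a | BN i \<Rightarrow> (if i < k then L ! i else t0 i))"

lemma inst_bound_simps[simp]: "inst_bound L t0 k (FN a) = a" "inst_bound L t0 k (BN i) = (if i < k then L ! i else t0 i)"
  by (auto simp: inst_bound_def)

lemma inst_bound_notin_image:
  assumes "l \<notin> set L" "length L = k"
    and "\<And>a. FN a \<in> set_forest F \<Longrightarrow> a \<noteq> l"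
    and "\<And>i. BN i \<in> set_forest F \<Longrightarrow> k \<le> i \<Longrightarrow> t i \<noteq> l"
  shows "l \<notin> inst_bound L t k ` set_forest F"
proof
  assume "l \<in> inst_bound L t k ` set_forest F"
  then obtain x where x: "x \<in> set_forest F" "l = inst_bound L t k x" by auto
  then show False using assms by (cases x) (auto simp: not_less nth_mem split: if_splits)
qed

lemma sc_resl_alpha:
  assumes "length L = k" "length L' = k" "distinct L" "distinct L'" "set L \<inter> set L' = {}"
    and "\<And>a. FN a \<in> set_forest F \<Longrightarrow> a \<notin> set L \<union> set L'"
    and "\<And>i. BN i \<in> set_forest F \<Longrightarrow> k \<le> i \<Longrightarrow> t0 i \<notin> set L \<union> set L'"
  shows "scong (resl (rev L) (proc_of_forest (map_forest (inst_bound L t0 k) F)))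
           (resl (rev L') (proc_of_forest (map_forest (inst_bound L' t0 k) F)))"
  using assms
proof (induction k arbitrary: L L' t0)
  case 0 then show ?case by (simp add: sc_refl)
next
  case (Suc k)
  obtain L0 l where L: "L = L0 @ [l]" using Suc.prems(1) by (metis length_Suc_conv_rev)
  obtain L0' l' where L': "L' = L0' @ [l']" using Suc.prems(2) by (metis length_Suc_conv_rev)
  have len: "length L0 = k" "length L0' = k" using Suc.prems L L' by auto
  have dL: "distinct L0" "l \<notin> set L0" "distinct L0'" "l' \<notin> set L0'" using Suc.prems L L' by auto
  have disj: "set L0 \<inter> set L0' = {}" "l \<noteq> l'" "l \<notin> set L0'" "l' \<notin> set L0" using Suc.prems L L' by auto
  define t1 where "t1 = t0(k := l)"
  define t2 where "t2 = t0(k := l')"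
  have eqL: "inst_bound L t0 (Suc k) = inst_bound L0 t1 k" unfolding t1_def
    by (auto simp: fun_eq_iff inst_bound_def L nth_append len split: atom.splits)
  have eqL': "inst_bound L' t0 (Suc k) = inst_bound L0' t2 k" unfolding t2_def
    by (auto simp: fun_eq_iff inst_bound_def L' nth_append len split: atom.splits)
  let ?X = "proc_of_forest (map_forest (inst_bound L0 t1 k) F)"
  have "l' \<notin> inst_bound L0 t1 k ` set_forest F"
    by (rule inst_bound_notin_image) (use Suc.prems L L' disj len in \<open>auto simp: t1_def\<close>)
  then have a1: "l' \<notin> names (resl (rev L0) ?X)" using disj by (auto simp: names_proc_of_forest)
  have "resl (rev L) (proc_of_forest (map_forest (inst_bound L t0 (Suc k)) F)) = Res l (resl (rev L0) ?X)"
    unfolding eqL by (simp add: L)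
  also have "scong \<dots> (Res l' (subst l' l (resl (rev L0) ?X)))" using a1 by (rule sc_alpha)
  also have "subst l' l (resl (rev L0) ?X) = resl (rev L0) (subst l' l ?X)"
    using dL by (intro subst_resl) auto
  also have "scong (Res l' (resl (rev L0) (subst l' l ?X)))
      (Res l' (resl (rev L0) (proc_of_forest (map_forest (rn l' l) (map_forest (inst_bound L0 t1 k) F)))))"
    by (intro sc_res resl_cong subst_proc_of_forest)
  also have "map_forest (rn l' l) (map_forest (inst_bound L0 t1 k) F) = map_forest (inst_bound L0 t2 k) F"
    unfolding map_forest_comp
  proof (rule map_forest_cong)
    fix x assume x: "x \<in> set_forest F"
    show "(rn l' l \<circ> inst_bound L0 t1 k) x = inst_bound L0 t2 k x"
    proof (cases x)
      case (FN a) then show ?thesis using x Suc.prems(6)[of a] L by (auto simp: rn_def)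
    next
      case (BN i)
      then show ?thesis using x Suc.prems(7)[of i] L dL len
        by (auto simp: rn_def t1_def t2_def nth_mem)
    qed
  qed
  also have "scong (Res l' (resl (rev L0) (proc_of_forest (map_forest (inst_bound L0 t2 k) F))))
      (Res l' (resl (rev L0') (proc_of_forest (map_forest (inst_bound L0' t2 k) F))))"
  proof (rule sc_res, rule Suc.IH)
    show "length L0 = k" "length L0' = k" "distinct L0" "distinct L0'" "set L0 \<inter> set L0' = {}"
      using len dL disj by auto
    show "\<And>a. FN a \<in> set_forest F \<Longrightarrow> a \<notin> set L0 \<union> set L0'" using Suc.prems(6) L L' by auto
    show "\<And>i. BN i \<in> set_forest F \<Longrightarrow> k \<le> i \<Longrightarrow> t2 i \<notin> set L0 \<union> set L0'"
      using Suc.prems(7) L L' disj dL by (auto simp: t2_def)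
  qed
  also have "Res l' (resl (rev L0') (proc_of_forest (map_forest (inst_bound L0' t2 k) F)))
      = resl (rev L') (proc_of_forest (map_forest (inst_bound L' t0 (Suc k)) F))"
    unfolding eqL' by (simp add: L')
  finally show ?case .
qed

text \<open>
  Permuting the indices of the normal form amounts to restricting the same names in a different
  order (\<open>L'\<close>); alpha-conversion then moves the names back into place.
\<close>

lemma sc_normal_form_perm_eqv:
  assumes "bounded_by r F" "\<And>a. FN a \<in> set_forest F \<Longrightarrow> a < N" "perm_eqv r F G"
  shows "scong (normal_form N r F) (normal_form N r G)"
proof -
  obtain p where p: "p permutes {..<r}" "G = map_forest (perm_bound p) F"
    using assms(3) by (auto simp: perm_eqv_def)
  define L where "L = [N..<N+r]"
  define L' where "L' = map (\<lambda>i. N + p i) [0..<r]"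
  \<comment> \<open>\<open>sc_resl_alpha\<close> needs disjoint name lists, so rename via a third block \<open>L''\<close>.\<close>
  define L'' where "L'' = [N+r..<N+r+r]"
  define t0 where "t0 = (\<lambda>i::nat. 0::nat)"
  have inj: "inj p" using p(1) permutes_inj by blast
  have lens: "length L = r" "length L' = r" "length L'' = r" by (auto simp: L_def L'_def L''_def)
  have dist1: "distinct L" "distinct L''" by (simp_all add: L_def L''_def)
  have dist2: "distinct L'" unfolding L'_def distinct_map
    by (auto intro!: inj_onI dest: injD[OF inj])
  note dist = dist1(1) dist2 dist1(2)
  have setL: "set L = {N..<N+r}" by (simp add: L_def)
  have setL'': "set L'' = {N+r..<N+r+r}" by (simp add: L''_def)
  have "set L' = (\<lambda>i. i + N) ` (p ` {..<r})" by (auto simp: L'_def lessThan_atLeast0)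
  also have "\<dots> = (\<lambda>i. i + N) ` {..<r}" by (simp add: permutes_image[OF p(1)])
  finally have setL': "set L' = set L" by (simp add: setL lessThan_atLeast0 add.commute)
  have m: "mset L' = mset L" using dist setL' by (simp add: set_eq_iff_mset_eq_distinct)
  have disj: "set L \<inter> set L'' = {}" "set L' \<inter> set L'' = {}" using setL' setL setL'' by auto
  have fresh1: "\<And>a. FN a \<in> set_forest F \<Longrightarrow> a \<notin> set L' \<union> set L''"
    using setL' setL setL'' assms(2) by fastforce
  have fresh2: "\<And>a. FN a \<in> set_forest F \<Longrightarrow> a \<notin> set L \<union> set L''"
    using setL setL'' assms(2) by fastforce
  have noB: "\<And>i. BN i \<in> set_forest F \<Longrightarrow> r \<le> i \<Longrightarrow> t0 i \<notin> X" for X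
    using assms(1) by (auto simp: bounded_by_def)
  have eF: "map_forest (ground N) F = map_forest (inst_bound L t0 r) F"
  proof (rule map_forest_cong)
    fix x assume "x \<in> set_forest F" then show "ground N x = inst_bound L t0 r x"
      using assms(1) by (cases x) (auto simp: bounded_by_def L_def)
  qed
  have eG: "map_forest (ground N) G = map_forest (inst_bound L' t0 r) F"
    unfolding p(2) map_forest_comp
  proof (rule map_forest_cong)
    fix x assume "x \<in> set_forest F" then show "(ground N \<circ> perm_bound p) x = inst_bound L' t0 r x"
      using assms(1) by (cases x) (auto simp: bounded_by_def L'_def)
  qed
  have "normal_form N r G = resl (rev L) (proc_of_forest (map_forest (inst_bound L' t0 r) F))"
    by (simp add: normal_form_def eG L_def)
  also have "scong \<dots> (resl (rev L') (proc_of_forest (map_forest (inst_bound L' t0 r) F)))"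
    by (rule sc_resl_perm) (simp add: m)
  also have "scong \<dots> (resl (rev L'') (proc_of_forest (map_forest (inst_bound L'' t0 r) F)))"
    by (rule sc_resl_alpha) (simp_all add: lens dist disj noB, use fresh1 in blast)
  also have "scong \<dots> (resl (rev L) (proc_of_forest (map_forest (inst_bound L t0 r) F)))"
    by (rule sc_sym, rule sc_resl_alpha) (simp_all add: lens dist disj noB, use fresh2 in blast)
  also have "\<dots> = normal_form N r F" by (simp add: normal_form_def eF L_def)
  finally show ?thesis by (rule sc_sym)
qed

theorem scong_complete:
  assumes "res_count P = res_count Q" "perm_eqv (res_count P) (canon P) (canon Q)"
  shows "scong P Q"
proof -
  obtain N where N: "\<forall>a\<in>names P \<union> names Q. a < N"
    using finite_nat_set_iff_bounded[of "names P \<union> names Q"] finite_names by auto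
  have "scong P (normal_form N (res_count P) (canon P))" using N by (intro scong_normal_form) auto
  also have "scong \<dots> (normal_form N (res_count P) (canon Q))"
  proof (rule sc_normal_form_perm_eqv[OF bounded_by_canon _ assms(2)])
    fix a assume "FN a \<in> set_forest (canon P)" then show "a < N" using N FN_in_canon_iff fn_names by blast
  qed
  also have "scong \<dots> Q"
  proof -
    have "scong Q (normal_form N (res_count Q) (canon Q))" using N by (intro scong_normal_form) auto
    then show ?thesis using assms(1) sc_sym by simp
  qed
  finally show ?thesis .
qed

lemma scong_canonI: "res_count X = res_count Y \<Longrightarrow> canon X = canon Y \<Longrightarrow> scong X Y"
  by (rule scong_complete) (auto simp: perm_eqv_refl)

lemma barb_scong: "barb X k \<Longrightarrow> scong X Y \<Longrightarrow> barb Y k"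
  unfolding barb_def by (meson sc_sym sc_trans)

lemma barb_fn: "barb X k \<Longrightarrow> k \<in> fn X"
  unfolding barb_def using fn_scong by fastforce

definition has_top_amb :: "name \<Rightarrow> forest \<Rightarrow> bool" where
  "has_top_amb k F \<longleftrightarrow> (\<exists>H. TAmb (FN k) H \<in># F)"

lemma has_top_amb_set_forest: "has_top_amb k F \<Longrightarrow> FN k \<in> set_forest F"
  unfolding has_top_amb_def using set_tree_subset_set_forest by fastforce

lemma has_top_amb_perm_bound: "has_top_amb k (map_forest (perm_bound p) F) \<longleftrightarrow> has_top_amb k F"
proof
  assume "has_top_amb k (map_forest (perm_bound p) F)"
  then obtain H where "TAmb (FN k) H \<in># map_forest (perm_bound p) F" by (auto simp: has_top_amb_def)
  then obtain t where t: "t \<in># F" "map_tree (perm_bound p) t = TAmb (FN k) H" by (auto simp: map_forest_def)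
  then show "has_top_amb k F"
  proof (cases t)
    case (TAmb x M) then show ?thesis using t by (cases x) (auto simp: has_top_amb_def)
  next
    case (TAct c M) then show ?thesis using t by auto
  qed
next
  assume "has_top_amb k F"
  then obtain H where "TAmb (FN k) H \<in># F" by (auto simp: has_top_amb_def)
  from map_tree_in_map_forest[OF this, of "perm_bound p"] show "has_top_amb k (map_forest (perm_bound p) F)" by (auto simp: has_top_amb_def)
qed

lemma has_top_amb_perm_eqv: "perm_eqv r F G \<Longrightarrow> has_top_amb k F \<longleftrightarrow> has_top_amb k G"
  by (auto simp: perm_eqv_def has_top_amb_perm_bound)

lemma has_top_amb_resl: "k \<notin> set A \<Longrightarrow> has_top_amb k (canon W) \<Longrightarrow> has_top_amb k (canon (resl A W))"
proof (induction A)
  case (Cons a A)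
  then obtain H where "TAmb (FN k) H \<in># canon (resl A W)" by (auto simp: has_top_amb_def)
  from map_tree_in_map_forest[OF this, of "bind_free a (res_count (resl A W))"] show ?case using Cons.prems by (auto simp: has_top_amb_def)
qed auto

lemma barb_has_top_amb: "barb Y k \<Longrightarrow> has_top_amb k (canon Y)"
proof -
  assume "barb Y k"
  then obtain A Q R where s: "scong Y (resl A (Par (Amb k Q) R))" "k \<notin> set A" by (auto simp: barb_def)
  have "has_top_amb k (canon (resl A (Par (Amb k Q) R)))" using s(2) by (intro has_top_amb_resl) (auto simp: has_top_amb_def)
  then show ?thesis using scong_canon_perm_eqv[OF s(1)] has_top_amb_perm_eqv by blast
qed

lemma has_top_amb_barb: "has_top_amb k (canon Y) \<Longrightarrow> barb Y k"
proof -
  assume "has_top_amb k (canon Y)"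
  then obtain H S where cY: "canon Y = add_mset (TAmb (FN k) H) S" by (auto simp: has_top_amb_def dest: multi_member_split)
  obtain N where N: "\<forall>a\<in>names Y \<union> {k}. a < N" using finite_nat_set_iff_bounded[of "names Y \<union> {k}"] finite_names by auto
  let ?Bs = "rev [N..<N + res_count Y]"
  have "scong Y (normal_form N (res_count Y) (canon Y))" using N by (intro scong_normal_form) auto
  also have "normal_form N (res_count Y) (canon Y)
      = resl ?Bs (proc_of_forest (add_mset (TAmb k (map_forest (ground N) H)) (map_forest (ground N) S)))"
    by (simp add: normal_form_def cY)
  also have "scong \<dots> (resl ?Bs (Par (Amb k (proc_of_forest (map_forest (ground N) H))) (proc_of_forest (map_forest (ground N) S))))"
    by (rule resl_cong) (metis proc_of_forest_add proc_of_tree_simps(1))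
  finally show ?thesis unfolding barb_def using N by (intro exI[of _ ?Bs]) auto
qed

lemma bisim_sym: "bisimBS P Q \<Longrightarrow> bisimBS Q P"
  unfolding bisimBS_def bs_bisim_def by blast

lemma bisim_barb: "bisimBS P Q \<Longrightarrow> barb (fill C P) n \<Longrightarrow> barb (fill C Q) n"
  unfolding bisimBS_def bs_bisim_def by blast

lemma bisim_red: "bisimBS P Q \<Longrightarrow> red (fill C P) P' \<Longrightarrow> \<exists>Q'. red (fill C Q) Q' \<and> bisimBS P' Q'"
proof -
  assume "bisimBS P Q" "red (fill C P) P'"
  then obtain R where R: "bs_bisim R" "R P Q" unfolding bisimBS_def by blast
  with \<open>red (fill C P) P'\<close> obtain Q' where "red (fill C Q) Q'" "R P' Q'" unfolding bs_bisim_def by blast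
  then show ?thesis using R unfolding bisimBS_def by blast
qed

lemma fill_scong: "scong X Y \<Longrightarrow> scong (fill C X) (fill C Y)"
  by (induction C) (auto intro: sc_amb sc_act sc_res sc_parL sc_parR)

lemma bisim_scong:
  assumes "scong P P0" "bisimBS P0 Q0" "scong Q0 Q"
  shows "bisimBS P Q"
proof -
  define R where "R X Y \<longleftrightarrow> (\<exists>X0 Y0. scong X X0 \<and> bisimBS X0 Y0 \<and> scong Y0 Y)" for X Y
  have "bs_bisim R"
    unfolding bs_bisim_def
  proof (intro conjI allI impI)
    fix X Y assume "R X Y"
    then show "R Y X" unfolding R_def using bisim_sym sc_sym by blast
  next
    fix X Y C n assume "R X Y" "barb (fill C X) n"
    then obtain X0 Y0 where h: "scong X X0" "bisimBS X0 Y0" "scong Y0 Y" by (auto simp: R_def)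
    have "barb (fill C X0) n" using \<open>barb (fill C X) n\<close> fill_scong[OF h(1)] barb_scong by blast
    then have "barb (fill C Y0) n" using h(2) bisim_barb by blast
    then show "barb (fill C Y) n" using fill_scong[OF h(3)] barb_scong by blast
  next
    fix X Y C X' assume "R X Y" "red (fill C X) X'"
    then obtain X0 Y0 where h: "scong X X0" "bisimBS X0 Y0" "scong Y0 Y" by (auto simp: R_def)
    have "red (fill C X0) X'"
      using red_scong[OF sc_sym[OF fill_scong[OF h(1)]] \<open>red (fill C X) X'\<close> sc_refl] .
    then obtain Y' where "red (fill C Y0) Y'" "bisimBS X' Y'" using h(2) bisim_red by blast
    then show "\<exists>Y'. red (fill C Y) Y' \<and> R X' Y'"
      using red_scong[OF sc_sym[OF fill_scong[OF h(3)]] _ sc_refl] unfolding R_def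
      by (meson sc_refl)
  qed
  moreover have "R P Q" unfolding R_def using assms by blast
  ultimately show ?thesis unfolding bisimBS_def by blast
qed

section \<open>Probing the open transition\<close>

lemma forest_step_creates_top_amb:
  assumes step: "forest_step M G" and top: "has_top_amb k G"
    and no_k: "\<And>a X. TAmb a X \<in># M \<Longrightarrow> FN k \<notin> set_tree (TAmb a X)"
  shows "\<exists>a G0 H R. M = add_mset (TAct (COpen a) G0) (add_mset (TAmb a H) R) \<and>
           G = G0 + H + R \<and> has_top_amb k G0"
proof -
  obtain X where X: "TAmb (FN k) X \<in># G" using top by (auto simp: has_top_amb_def)
  have no_top: "TAmb (FN k) Y \<notin># M" for Y using no_k[of "FN k" Y] by auto
  from step show ?thesis
  proof cases
    case (fs_open a G0 H R)
    have "FN k \<notin> set_forest H" using no_k[of a H] fs_open(1) by auto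
    then have "TAmb (FN k) X \<notin># H" using set_tree_subset_set_forest by fastforce
    moreover have "TAmb (FN k) X \<notin># R" using no_top fs_open(1) by auto
    ultimately have "has_top_amb k G0" using X fs_open(2) by (auto simp: has_top_amb_def)
    then show ?thesis using fs_open by blast
  next
    case (fs_in a b G0 H K R)
    then show ?thesis using X no_top no_k[of b K] by auto
  next
    case (fs_out b a G0 H K R)
    have "FN k \<notin> set_tree (TAmb b (add_mset (TAmb a (add_mset (TAct (COut b) G0) H)) K))"
      by (rule no_k) (simp add: fs_out(1))
    then show ?thesis using X no_top fs_out by auto
  next
    case (fs_amb G0 G0' a R)
    then show ?thesis using X no_top no_k[of a G0] by auto
  qed
qed

lemma forest_step_removes_top_amb:
  assumes step: "forest_step M G" and amb: "TAmb (FN k) {#} \<in># M" and no_top: "\<not> has_top_amb k G"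
  shows "\<exists>G0 R. M = add_mset (TAct (COpen (FN k)) G0) (add_mset (TAmb (FN k) {#}) R) \<and> G = G0 + R"
  using step
proof cases
  case (fs_open a G0 H R)
  then show ?thesis using amb no_top by (auto simp: has_top_amb_def)
next
  case (fs_in a b G0 H K R)
  then show ?thesis using amb no_top by (auto simp: has_top_amb_def)
next
  case (fs_out b a G0 H K R)
  then show ?thesis using amb no_top by (auto simp: has_top_amb_def)
next
  case (fs_amb G0 G0' a R)
  then show ?thesis using amb no_top by (auto simp: has_top_amb_def)
qed

lemma forest_step_open_probe:
  assumes step: "forest_step (add_mset (TAct (COpen (FN k)) {#}) (add_mset (TAct (COpen (FN n)) F) \<Phi>)) G"
    and top: "has_top_amb k G" and fresh: "FN k \<notin> set_forest \<Phi>"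
  shows "\<exists>H S. \<Phi> = add_mset (TAmb (FN n) H) S \<and> G = add_mset (TAct (COpen (FN k)) {#}) (F + H + S)"
proof -
  have no_k: "FN k \<notin> set_tree t" if "t \<in># \<Phi>" for t
    using fresh that set_tree_subset_set_forest by blast
  obtain a G0 H R where M: "add_mset (TAct (COpen (FN k)) {#}) (add_mset (TAct (COpen (FN n)) F) \<Phi>)
      = add_mset (TAct (COpen a) G0) (add_mset (TAmb a H) R)"
    and G: "G = G0 + H + R" and G0: "has_top_amb k G0"
    using forest_step_creates_top_amb[OF step top] no_k by fastforce
  have "FN k \<in> set_tree (TAct (COpen a) G0)" using has_top_amb_set_forest[OF G0] by simp
  moreover have "TAct (COpen a) G0 \<in># add_mset (TAct (COpen (FN k)) {#}) (add_mset (TAct (COpen (FN n)) F) \<Phi>)"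
    unfolding M by simp
  ultimately have "TAct (COpen a) G0 = TAct (COpen (FN n)) F"
    using no_k G0 by (auto simp del: set_tree_TAct simp: has_top_amb_def)
  then have a: "a = FN n" "G0 = F" by auto
  with M have "add_mset (TAmb (FN n) H) R = add_mset (TAct (COpen (FN k)) {#}) \<Phi>"
    by (auto simp: add_eq_conv_ex)
  then obtain S where "\<Phi> = add_mset (TAmb (FN n) H) S" "R = add_mset (TAct (COpen (FN k)) {#}) S"
    by (auto simp: add_eq_conv_ex)
  then show ?thesis using G a by auto
qed

lemma forest_step_cleanup_probe:
  assumes step: "forest_step (add_mset (TAct (COpen (FN k)) {#}) (add_mset (TAmb (FN k) {#}) \<Psi>)) G"
    and no_top: "\<not> has_top_amb k G" and fresh: "FN k \<notin> set_forest \<Psi>"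
  shows "G = \<Psi>"
proof -
  obtain G0 R where M: "add_mset (TAct (COpen (FN k)) {#}) (add_mset (TAmb (FN k) {#}) \<Psi>)
      = add_mset (TAct (COpen (FN k)) G0) (add_mset (TAmb (FN k) {#}) R)" and G: "G = G0 + R"
    using forest_step_removes_top_amb[OF step _ no_top] by auto
  have "TAct (COpen (FN k)) G0 \<notin># \<Psi>"
    using fresh set_tree_subset_set_forest by fastforce
  then have "G0 = {#}" using M by (auto simp: add_eq_conv_ex)
  then show ?thesis using M G by simp
qed

lemma map_forest_bind_range_ground:
  assumes "bounded_by m X" "\<And>a. FN a \<in> set_forest X \<Longrightarrow> a < N0"
  shows "map_forest (bind_range N0 m r \<circ> (FN \<circ> ground N0)) X = map_forest (shift_bound r) X"
proof (rule map_forest_cong)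
  fix x assume "x \<in> set_forest X"
  then show "(bind_range N0 m r \<circ> (FN \<circ> ground N0)) x = shift_bound r x"
    using assms by (cases x; force simp: bind_range_def bounded_by_def)
qed

lemma map_forest_bind_range_idI:
  assumes "\<And>a. FN a \<in> set_forest X \<Longrightarrow> a < N0"
  shows "map_forest (bind_range N0 m r) X = X"
  by (rule map_forest_idI) (use assms in \<open>fastforce simp: bind_range_def split: atom.splits\<close>)

lemma open_trans_canon:
  assumes Q: "canon Q = add_mset (TAmb (FN n) H) S"
  shows "\<exists>Q'. open_trans n T Q Q' \<and> res_count Q' = res_count T + res_count Q \<and>
              canon Q' = canon T + map_forest (shift_bound (res_count T)) (H + S)"
proof -
  obtain N where N: "\<forall>a\<in>names Q \<union> names T \<union> {n}. a < N"
    using finite_nat_set_iff_bounded[of "names Q \<union> names T \<union> {n}"] by (auto simp: finite_names)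
  define B where "B = rev [N..<N + res_count Q]"
  define Q1 where "Q1 = proc_of_forest (map_forest (ground N) H)"
  define Q2 where "Q2 = proc_of_forest (map_forest (ground N) S)"
  define Q' where "Q' = resl B (Par (Par Q1 T) Q2)"
  have "scong Q (normal_form N (res_count Q) (canon Q))" using N by (intro scong_normal_form) auto
  also have "normal_form N (res_count Q) (canon Q) =
      resl B (proc_of_forest (add_mset (TAmb n (map_forest (ground N) H)) (map_forest (ground N) S)))"
    by (simp add: normal_form_def B_def Q)
  also have "scong \<dots> (resl B (Par (Amb n Q1) Q2))"
    unfolding Q1_def Q2_def by (rule resl_cong) (metis proc_of_forest_add proc_of_tree_simps(1))
  finally have "scong Q (resl B (Par (Amb n Q1) Q2))" .
  moreover have "n \<notin> set B" "set B \<inter> fn T = {}"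
    using N fn_names[of T] by (auto simp: B_def) (meson UnI2 not_le subsetD)
  ultimately have "open_trans n T Q Q'"
    unfolding open_trans_def Q'_def using sc_refl by blast
  moreover have "res_count Q' = res_count T + res_count Q"
    using canon_proc_of_forest by (simp add: Q'_def B_def Q1_def Q2_def)
  moreover have "canon Q' = canon T + map_forest (shift_bound (res_count T)) (H + S)"
  proof -
    have Q_atoms: "bounded_by (res_count Q) (canon Q)" "\<And>a. FN a \<in> set_forest (canon Q) \<Longrightarrow> a < N"
      using bounded_by_canon[of Q] N FN_in_canon_iff[of _ Q] fn_names[of Q] by auto
    have H: "bounded_by (res_count Q) H" "\<And>a. FN a \<in> set_forest H \<Longrightarrow> a < N"
      and S: "bounded_by (res_count Q) S" "\<And>a. FN a \<in> set_forest S \<Longrightarrow> a < N"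
      using Q_atoms by (auto simp: Q bounded_by_def)
    have T: "FN a \<in> set_forest (canon T) \<Longrightarrow> a < N" for a
      using N FN_in_canon_iff[of a T] fn_names[of T] by auto
    have "canon Q' = map_forest (bind_range N (res_count Q) (res_count T)) (canon (Par (Par Q1 T) Q2))"
      unfolding Q'_def B_def using canon_proc_of_forest by (simp add: canon_resl_fresh Q1_def Q2_def)
    also have "\<dots> = map_forest (shift_bound (res_count T)) H + canon T + map_forest (shift_bound (res_count T)) S"
      using canon_proc_of_forest map_forest_bind_range_idI[OF T]
      by (simp add: Q1_def Q2_def map_forest_bind_range_ground[OF H] map_forest_bind_range_ground[OF S])
    finally show ?thesis by (simp add: add_ac)
  qed
  ultimately show ?thesis by blast
qed

definition probe :: "name \<Rightarrow> name \<Rightarrow> proc \<Rightarrow> proc" where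
  "probe k n T = Par (Act (Open k) Nil) (Act (Open n) (Par T (Amb k Nil)))"

lemma probe_runs:
  assumes P: "scong P (resl A (Par (Amb n P1) P2))" and P': "scong P' (resl A (Par (Par P1 T) P2))"
    and A: "n \<notin> set A" "set A \<inter> fn T = {}"
    and k: "k \<notin> set A \<union> fn T \<union> fn P1 \<union> fn P2 \<union> {n}"
  shows "\<exists>Z. red (Par (probe k n T) P) Z \<and> barb Z k \<and> red Z P' \<and> \<not> barb P' k"
proof -
  define Z where "Z = resl A (Par (Par (Par T (Amb k Nil)) P1) (Par (Act (Open k) Nil) P2))"
  have "scong (Par (probe k n T) P) (Par (probe k n T) (resl A (Par (Amb n P1) P2)))"
    using P by (rule sc_parR)
  also have "scong \<dots> (resl A (Par (probe k n T) (Par (Amb n P1) P2)))"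
    using A k by (intro sc_par_resl) (auto simp: probe_def)
  also have "scong \<dots> (resl A (Par (Par (Act (Open n) (Par T (Amb k Nil))) (Amb n P1)) (Par (Act (Open k) Nil) P2)))"
    by (rule resl_cong, rule scong_canonI) (auto simp: probe_def add_ac add_mset_commute)
  finally have "red (Par (probe k n T) P) Z"
    unfolding Z_def by (rule red_scong[OF _ _ sc_refl]) (intro red_resl red_par red_open)
  moreover have "barb Z k"
  proof -
    have "scong Z (resl A (Par (Amb k Nil) (Par (Par T P1) (Par (Act (Open k) Nil) P2))))"
      unfolding Z_def by (rule resl_cong, rule scong_canonI) (auto simp: add_ac add_mset_commute)
    then show ?thesis unfolding barb_def using k by blast
  qed
  moreover have "red Z P'"
  proof -
    have "scong Z (resl A (Par (Par (Act (Open k) Nil) (Amb k Nil)) (Par (Par T P1) P2)))"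
      unfolding Z_def by (rule resl_cong, rule scong_canonI) (auto simp: add_ac add_mset_commute)
    moreover have "red (resl A (Par (Par (Act (Open k) Nil) (Amb k Nil)) (Par (Par T P1) P2)))
                       (resl A (Par (Par Nil Nil) (Par (Par T P1) P2)))"
      by (intro red_resl red_par red_open)
    moreover have "scong (resl A (Par (Par Nil Nil) (Par (Par T P1) P2))) P'"
    proof -
      have "scong (Par (Par Nil Nil) (Par (Par T P1) P2)) (Par (Par T P1) P2)"
        by (rule scong_canonI) simp_all
      also have "scong \<dots> (Par (Par P1 T) P2)" by (rule sc_parL, rule sc_par_comm)
      finally show ?thesis using P' by (meson resl_cong sc_sym sc_trans)
    qed
    ultimately show ?thesis by (rule red_scong)
  qed
  moreover have "\<not> barb P' k"
    using barb_fn fn_scong[OF P'] k by fastforce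
  ultimately show ?thesis by blast
qed

lemma probe_open_step:
  assumes k: "k \<notin> fn Q \<union> fn T" and red: "red (Par (probe k n T) Q) Y" and barb: "barb Y k"
  shows "\<exists>H S p. canon Q = add_mset (TAmb (FN n) H) S \<and> p permutes {..<res_count T + res_count Q} \<and>
      res_count Y = res_count T + res_count Q \<and>
      canon Y = add_mset (TAct (COpen (FN k)) {#}) (add_mset (TAmb (FN k) {#})
        (map_forest (perm_bound p) (canon T + map_forest (shift_bound (res_count T)) (H + S))))"
proof -
  define \<Phi> where "\<Phi> = map_forest (shift_bound (res_count T)) (canon Q)"
  have canon_probe: "canon (Par (probe k n T) Q) = add_mset (TAct (COpen (FN k)) {#})
      (add_mset (TAct (COpen (FN n)) (add_mset (TAmb (FN k) {#}) (canon T))) \<Phi>)"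
    by (simp add: probe_def \<Phi>_def)
  have fresh: "FN k \<notin> set_forest \<Phi>"
    using k FN_in_canon_iff[of k Q] by (auto simp: \<Phi>_def FN_in_shift_bound)
  obtain G where step: "forest_step (canon (Par (probe k n T) Q)) G"
    and G: "perm_eqv (res_count T + res_count Q) G (canon Y)"
    and r: "res_count Y = res_count T + res_count Q"
    using red_forest_step[OF red] by (auto simp: probe_def)
  have "has_top_amb k G"
    using barb_has_top_amb[OF barb] has_top_amb_perm_eqv[OF G] by blast
  then obtain H' S' where \<Phi>: "\<Phi> = add_mset (TAmb (FN n) H') S'"
    and G_eq: "G = add_mset (TAct (COpen (FN k)) {#}) (add_mset (TAmb (FN k) {#}) (canon T + H' + S'))"
    using forest_step_open_probe[OF step[unfolded canon_probe] _ fresh] by auto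
  obtain H S where Q: "canon Q = add_mset (TAmb (FN n) H) S"
    and H: "map_forest (shift_bound (res_count T)) H = H'"
    and S: "map_forest (shift_bound (res_count T)) S = S'"
  proof -
    have FN_n: "x = FN n" if "shift_bound (res_count T) x = FN n" for x
      using that by (cases x) auto
    have "map_forest (shift_bound (res_count T)) (canon Q) = add_mset (TAmb (FN n) H') S'"
      using \<Phi> by (simp only: \<Phi>_def)
    from map_forest_add_mset_TAmb_inv[OF FN_n this] show ?thesis using that by blast
  qed
  obtain p where "p permutes {..<res_count T + res_count Q}" "canon Y = map_forest (perm_bound p) G"
    using G by (auto simp: perm_eqv_def)
  then show ?thesis using Q r by (intro exI[of _ H] exI[of _ S] exI[of _ p]) (simp add: G_eq H S add.assoc)
qed

lemma probe_cleanup_step: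
  assumes Y: "canon Y = add_mset (TAct (COpen (FN k)) {#}) (add_mset (TAmb (FN k) {#}) \<Psi>)"
    and fresh: "FN k \<notin> set_forest \<Psi>" and red: "red Y Y'" and no_barb: "\<not> barb Y' k"
  shows "res_count Y' = res_count Y \<and> perm_eqv (res_count Y) \<Psi> (canon Y')"
proof -
  obtain G where step: "forest_step (canon Y) G" and G: "perm_eqv (res_count Y) G (canon Y')"
    and r: "res_count Y' = res_count Y"
    using red_forest_step[OF red] by auto
  have "\<not> has_top_amb k G"
    using no_barb has_top_amb_barb has_top_amb_perm_eqv[OF G] by blast
  then have "G = \<Psi>" using forest_step_cleanup_probe step fresh unfolding Y by blast
  then show ?thesis using G r by simp
qed

lemma probe_inversion:
  assumes k: "k \<notin> fn Q \<union> fn T"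
    and red1: "red (Par (probe k n T) Q) Y1" and barb1: "barb Y1 k"
    and red2: "red Y1 Y2" and no_barb2: "\<not> barb Y2 k"
  shows "\<exists>Q'. open_trans n T Q Q' \<and> scong Y2 Q'"
proof -
  obtain H S p where Q: "canon Q = add_mset (TAmb (FN n) H) S"
    and p: "p permutes {..<res_count T + res_count Q}" and r1: "res_count Y1 = res_count T + res_count Q"
    and Y1: "canon Y1 = add_mset (TAct (COpen (FN k)) {#}) (add_mset (TAmb (FN k) {#})
        (map_forest (perm_bound p) (canon T + map_forest (shift_bound (res_count T)) (H + S))))"
    using probe_open_step[OF k red1 barb1] by blast
  obtain Q' where Q': "open_trans n T Q Q'" "res_count Q' = res_count T + res_count Q"
    "canon Q' = canon T + map_forest (shift_bound (res_count T)) (H + S)"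
    using open_trans_canon[OF Q] by blast
  have "FN k \<notin> set_forest (canon T)" "FN k \<notin> set_forest (canon Q)"
    using k FN_in_canon_iff by auto
  then have "FN k \<notin> set_forest (canon Q')"
    using Q Q'(3) by (simp add: FN_in_shift_bound)
  then have "FN k \<notin> set_forest (map_forest (perm_bound p) (canon Q'))"
    by (simp add: FN_in_perm_bound)
  then have "res_count Y2 = res_count Y1 \<and> perm_eqv (res_count Y1) (map_forest (perm_bound p) (canon Q')) (canon Y2)"
    using probe_cleanup_step[OF Y1[folded Q'(3)] _ red2 no_barb2] by blast
  then have "scong Y2 Q'"
    using Q'(2) r1 perm_eqv_trans[OF perm_eqv_map[OF p, of "canon Q'"]]
    by (intro scong_complete) (auto intro: perm_eqv_sym)
  with Q'(1) show ?thesis by blast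
qed

theorem mainTheorem5:
  assumes "bisimBS P Q"
      and "open_trans n T P P'"
  shows "\<exists>Q'. open_trans n T Q Q' \<and> bisimBS P' Q'"
proof -
  obtain A P1 P2 where P: "scong P (resl A (Par (Amb n P1) P2))" "n \<notin> set A" "set A \<inter> fn T = {}"
    and P': "scong P' (resl A (Par (Par P1 T) P2))"
    using assms(2) unfolding open_trans_def by blast
  obtain k where k: "k \<notin> set A \<union> names T \<union> names P1 \<union> names P2 \<union> names Q \<union> {n}"
  proof -
    have "finite (set A \<union> names T \<union> names P1 \<union> names P2 \<union> names Q \<union> {n})"
      by (simp add: finite_names)
    then show ?thesis using that by (metis ex_new_if_finite infinite_UNIV_nat)
  qed
  then have k_fn: "k \<notin> set A \<union> fn T \<union> fn P1 \<union> fn P2 \<union> {n}" "k \<notin> fn Q \<union> fn T"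
    using fn_names[of T] fn_names[of P1] fn_names[of P2] fn_names[of Q] by auto
  obtain Z where Z: "red (Par (probe k n T) P) Z" "barb Z k" "red Z P'" "\<not> barb P' k"
    using probe_runs[OF P(1) P' P(2,3) k_fn(1)] by blast
  obtain Y1 where Y1: "red (Par (probe k n T) Q) Y1" "bisimBS Z Y1"
    using bisim_red[OF assms(1), of "CParR (probe k n T) Hole"] Z(1) by auto
  have "barb Y1 k" using bisim_barb[OF Y1(2), of Hole] Z(2) by simp
  obtain Y2 where Y2: "red Y1 Y2" "bisimBS P' Y2"
    using bisim_red[OF Y1(2), of Hole] Z(3) by auto
  have "\<not> barb Y2 k" using bisim_barb[OF bisim_sym[OF Y2(2)], of Hole] Z(4) by auto
  then obtain Q' where "open_trans n T Q Q'" "scong Y2 Q'"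
    using probe_inversion[OF k_fn(2) Y1(1) \<open>barb Y1 k\<close> Y2(1)] by blast
  then show ?thesis using bisim_scong[OF sc_refl Y2(2)] by blast
qed

end
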